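(* Let $\{\Delta_1,\dots,\Delta_r\}$ be a nef-partition of a reflexive polytope $\Delta$ with dual nef-partition $\{\nabla_1,\dots,\nabla_r\}$, let $i\in J\subset I=\{1,\dots,r\}$ and $v\in\nabla_i^0$. Then a lattice point $w\in M$ lies in the relative interior of $\sum_{j\in J}\Delta_j(v)$ if and only if $w\in\Delta_i^0$ and $v$ lies in the relative interior of $\nabla_i(w)+\sum_{j\notin J}\nabla_j(w)$. Moreover, in this case $$\dim\Big(\sum_{j\in J}\Delta_j(v)\Big)+\dim\Big(\nabla_i(w)+\sum_{j\notin J}\nabla_j(w)\Big)=d-1.$$
   Context: Let $M\cong\mathbb Z^d$, $N=\mathrm{Hom}(M,\mathbb Z)$, $\langle\cdot,\cdot\rangle$ the pairing. A $d$-dimensional lattice polytope $\Delta\subset M_{\mathbb R}$ is reflexive if $\Delta=\{x:\langle x,e_k\rangle\ge-1,\ k=1,\dots,n\}$ with $e_k\in N$ the primitive inward facet normals; $\Delta^*=\mathrm{Conv}(e_1,\dots,e_n)$. A nef-partition is a Minkowski decomposition $\Delta=\Delta_1+\dots+\Delta_r$ into lattice polytopes with $\varphi_j(e_k)\in\{0,1\}$ for all $j,k$, $\varphi_j(y)=-\min_{x\in\Delta_j}\langle x,y\rangle$; the dual nef-partition consists of $\nabla_j=\mathrm{Conv}(\{0\}\cup\{e_k:\varphi_j(e_k)=1\})\subset N_{\mathbb R}$, and $\nabla^*=\mathrm{Conv}(\Delta_1\cup\dots\cup\Delta_r)$ is reflexive. Put $\nabla_i^0=\nabla_i\cap\partial\Delta^*\cap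 N$ and $\Delta_i^0=\Delta_i\cap\partial\nabla^*\cap M$. For $v\in N$, $\Delta_j(v)$ is the face of $\Delta_j$ on which $\langle\cdot,v\rangle$ attains its minimum; for $w\in M$, $\nabla_j(w)$ is the face of $\nabla_j$ on which $\langle w,\cdot\rangle$ attains its minimum. *)

theory Defs
  imports "HOL-Analysis.Analysis"
begin

text \<open>We identify both M_R and N_R with real^'n (d = CARD('n)) via a lattice basis and
its dual basis; the pairing is then the standard inner product, and M, N are the
integer vectors.\<close>

definition lattice_pt :: "real^'n \<Rightarrow> bool" where
  "lattice_pt x \<longleftrightarrow> (\<forall>i. x $ i \<in> \<int>)"

definition primitive :: "real^'n \<Rightarrow> bool" where
  "primitive e \<longleftrightarrow> lattice_pt e \<and> e \<noteq> 0 \<and>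
     (\<forall>u (k::int). lattice_pt u \<and> k \<ge> 1 \<and> e = of_int k *\<^sub>R u \<longrightarrow> k = 1)"

definition lattice_polytope :: "(real^'n) set \<Rightarrow> bool" where
  "lattice_polytope P \<longleftrightarrow> (\<exists>S. finite S \<and> (\<forall>x\<in>S. lattice_pt x) \<and> P = convex hull S)"

definition minface :: "(real^'n) set \<Rightarrow> real^'n \<Rightarrow> (real^'n) set" where
  "minface P y = {x \<in> P. x \<bullet> y = Inf ((\<lambda>z. z \<bullet> y) ` P)}"

definition facet_normals :: "(real^'n) set \<Rightarrow> (real^'n) set" where
  "facet_normals P = {e. primitive e \<and> minface P e facet_of P}"

definition reflexive :: "(real^'n) set \<Rightarrow> bool" where
  "reflexive P \<longleftrightarrow> lattice_polytope P \<and> aff_dim P = int CARD('n) \<and>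
     P = {x. \<forall>e\<in>facet_normals P. x \<bullet> e \<ge> -1}"

definition dual_polytope :: "(real^'n) set \<Rightarrow> (real^'n) set" where
  "dual_polytope P = convex hull (facet_normals P)"

definition msum :: "'i set \<Rightarrow> ('i \<Rightarrow> (real^'n) set) \<Rightarrow> (real^'n) set" where
  "msum J F = {y. \<exists>x. (\<forall>j\<in>J. x j \<in> F j) \<and> y = (\<Sum>j\<in>J. x j)}"

definition mplus :: "(real^'n) set \<Rightarrow> (real^'n) set \<Rightarrow> (real^'n) set" where
  "mplus A B = {a + b | a b. a \<in> A \<and> b \<in> B}"

definition phi :: "(real^'n) set \<Rightarrow> real^'n \<Rightarrow> real" where
  "phi P y = - Inf ((\<lambda>x. x \<bullet> y) ` P)"

definition nef_partition :: "(real^'n) set \<Rightarrow> nat \<Rightarrow> (nat \<Rightarrow> (real^'n) set) \<Rightarrow> bool" where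
  "nef_partition D r Ds \<longleftrightarrow> reflexive D \<and>
     (\<forall>j\<in>{1..r}. lattice_polytope (Ds j)) \<and>
     D = msum {1..r} Ds \<and>
     (\<forall>j\<in>{1..r}. \<forall>e\<in>facet_normals D. phi (Ds j) e \<in> {0, 1})"

definition nabla :: "(real^'n) set \<Rightarrow> (nat \<Rightarrow> (real^'n) set) \<Rightarrow> nat \<Rightarrow> (real^'n) set" where
  "nabla D Ds j = convex hull ({0} \<union> {e \<in> facet_normals D. phi (Ds j) e = 1})"

definition nabla_dual :: "nat \<Rightarrow> (nat \<Rightarrow> (real^'n) set) \<Rightarrow> (real^'n) set" where
  "nabla_dual r Ds = convex hull (\<Union>j\<in>{1..r}. Ds j)"

definition nabla0 :: "(real^'n) set \<Rightarrow> (nat \<Rightarrow> (real^'n) set) \<Rightarrow> nat \<Rightarrow> (real^'n) set" where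
  "nabla0 D Ds i = nabla D Ds i \<inter> frontier (dual_polytope D) \<inter> Collect lattice_pt"

definition Delta0 :: "nat \<Rightarrow> (nat \<Rightarrow> (real^'n) set) \<Rightarrow> nat \<Rightarrow> (real^'n) set" where
  "Delta0 r Ds i = Ds i \<inter> frontier (nabla_dual r Ds) \<inter> Collect lattice_pt"

end

(* Write F = Sum_{j in J} Delta_j(v) and G w = nabla_i(w) + Sum_{j notin J} nabla_j(w).
   Every facet normal e of Delta has a colour, the unique j with phi_j(e) = 1, and a KKT argument
   shows that Sum_{j in J} Delta_j is cut out by the inequalities <x, e> >= -[colour e in J],
   while nabla_i + Sum_{j notin J} nabla_j is cut out by inequalities indexed by the vertices of
   the Delta_j. The two sums pair to at least -1, and F and G w are the faces on which <., v>
   and <w, .> equal -1. A relative interior point of either face forces <q, y> = -1 on F x G w;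
   then every constraint tight at w (at v) is constant on F (on G w), which characterises the
   relative interior of a face of a polyhedron. The same orthogonality makes the direction space
   of F the orthogonal complement of span (G w), whence the dimension formula. Integrality of
   lattice points is used to show that w lies in Delta_i and that nabla_i(w) is the face at -1. *)

theory Submission
  imports Defs
begin

section \<open>Support functions, minimal faces and Minkowski sums\<close>

lemma minface_phi: "minface P y = {x \<in> P. x \<bullet> y = - phi P y}"
  by (simp add: minface_def phi_def)

lemma phi_eqI:
  assumes "p \<in> P" "\<And>q. q \<in> P \<Longrightarrow> p \<bullet> y \<le> q \<bullet> y"
  shows "phi P y = - (p \<bullet> y)"
  unfolding phi_def by (subst cInf_eq_minimum[of "p \<bullet> y"]) (use assms in auto)

lemma phi_attained:
  fixes P :: "(real^'n) set"
  assumes "compact P" "P \<noteq> {}"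
  obtains p where "p \<in> P" "\<And>q. q \<in> P \<Longrightarrow> p \<bullet> y \<le> q \<bullet> y" "phi P y = - (p \<bullet> y)"
proof -
  have "continuous_on P (\<lambda>z. z \<bullet> y)"
    by (intro continuous_intros)
  then obtain p where "p \<in> P" "\<And>q. q \<in> P \<Longrightarrow> p \<bullet> y \<le> q \<bullet> y"
    using continuous_attains_inf[OF assms] by blast
  with phi_eqI that show ?thesis by blast
qed

lemma neg_phi_le_inner:
  fixes P :: "(real^'n) set"
  assumes "compact P" "x \<in> P"
  shows "- phi P y \<le> x \<bullet> y"
proof -
  obtain p where "\<And>q. q \<in> P \<Longrightarrow> p \<bullet> y \<le> q \<bullet> y" "phi P y = - (p \<bullet> y)"
    using phi_attained[OF assms(1)] assms(2) by blast
  with assms(2) show ?thesis by simp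
qed

lemma minface_nonempty:
  fixes P :: "(real^'n) set"
  assumes "compact P" "P \<noteq> {}"
  shows "minface P y \<noteq> {}"
proof -
  obtain p where "p \<in> P" "phi P y = - (p \<bullet> y)"
    using phi_attained[OF assms] by blast
  then show ?thesis
    by (auto simp: minface_phi)
qed

lemma convex_minface:
  fixes P :: "(real^'n) set"
  shows "convex P \<Longrightarrow> convex (minface P y)"
  unfolding minface_phi using convex_Int[OF _ convex_hyperplane[of y "- phi P y"]]
  by (simp add: Int_def inner_commute)

lemma phi_convex_hull_attained:
  fixes S :: "(real^'n) set"
  assumes "finite S" "S \<noteq> {}"
  obtains s where "s \<in> S" "phi (convex hull S) y = - (s \<bullet> y)"
proof -
  obtain s where s: "s \<in> S" "\<And>t. t \<in> S \<Longrightarrow> s \<bullet> y \<le> t \<bullet> y"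
    using phi_attained[OF finite_imp_compact[OF assms(1)] assms(2)] by blast
  then have "S \<subseteq> {x. y \<bullet> x \<ge> s \<bullet> y}"
    by (auto simp: inner_commute)
  then have "convex hull S \<subseteq> {x. y \<bullet> x \<ge> s \<bullet> y}"
    by (rule hull_minimal) (rule convex_halfspace_ge)
  then have "phi (convex hull S) y = - (s \<bullet> y)"
    using s(1) by (intro phi_eqI) (auto simp: hull_inc inner_commute)
  with s(1) that show ?thesis
    by blast
qed

lemma msum_eq_sum: "finite J \<Longrightarrow> msum J F = sum F J"
  by (auto simp: msum_def set_sum_alt)

lemma msum_memI: "(\<And>j. j \<in> J \<Longrightarrow> x j \<in> F j) \<Longrightarrow> (\<Sum>j\<in>J. x j) \<in> msum J F"
  unfolding msum_def by blast

lemma msum_memI_single: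
  assumes "finite J" "i \<in> J" "\<And>k. k \<in> J - {i} \<Longrightarrow> 0 \<in> F k" "x \<in> F i"
  shows "x \<in> msum J F"
proof -
  have "(\<Sum>k\<in>J. if k = i then x else 0) \<in> msum J F"
    using assms(3,4) by (intro msum_memI) auto
  with assms(1,2) show ?thesis
    by simp
qed

lemma msum_memI_pair:
  assumes "finite J" "i \<in> J" "j \<in> J" "i \<noteq> j" "\<And>k. k \<in> J - {i} \<Longrightarrow> 0 \<in> F k"
    "x \<in> F i" "y \<in> F j"
  shows "x + y \<in> msum J F"
proof -
  have "(\<Sum>k\<in>J. (if k = i then x else 0) + (if k = j then y else 0)) \<in> msum J F"
    using assms(4-7) by (intro msum_memI) auto
  with assms(1-3) show ?thesis
    by (simp add: sum.distrib)
qed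

lemma msum_scaled_memE:
  assumes "x \<in> msum J (\<lambda>j. (\<lambda>y. c j *\<^sub>R y) ` F j)"
  obtains xx where "\<And>j. j \<in> J \<Longrightarrow> xx j \<in> F j" "x = (\<Sum>j\<in>J. c j *\<^sub>R xx j)"
proof -
  obtain y where y: "\<And>j. j \<in> J \<Longrightarrow> y j \<in> (\<lambda>y. c j *\<^sub>R y) ` F j" "x = (\<Sum>j\<in>J. y j)"
    using assms unfolding msum_def by blast
  then have "\<forall>j\<in>J. \<exists>p. p \<in> F j \<and> y j = c j *\<^sub>R p"
    by blast
  then obtain xx where xx: "\<And>j. j \<in> J \<Longrightarrow> xx j \<in> F j \<and> y j = c j *\<^sub>R xx j"
    by metis
  have "x = (\<Sum>j\<in>J. c j *\<^sub>R xx j)"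
    unfolding y(2) using xx by (intro sum.cong) auto
  with xx that show ?thesis
    by blast
qed

lemma msum_singleton [simp]: "msum {j} F = F j"
  unfolding msum_def by auto

lemma msum_insert:
  "finite K \<Longrightarrow> i \<notin> K \<Longrightarrow> msum (insert i K) F = mplus (F i) (msum K F)"
  by (simp add: msum_eq_sum mplus_def set_plus_def) blast

lemma msum_nonempty:
  assumes "\<And>j. j \<in> J \<Longrightarrow> F j \<noteq> {}"
  shows "msum J F \<noteq> {}"
proof -
  have "\<And>j. j \<in> J \<Longrightarrow> (SOME x. x \<in> F j) \<in> F j"
    using assms by (simp add: some_in_eq)
  then have "(\<Sum>j\<in>J. SOME x. x \<in> F j) \<in> msum J F"
    by (rule msum_memI)
  then show ?thesis
    by blast
qed

lemma compact_msum:
  fixes F :: "'i \<Rightarrow> (real^'n) set"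
  assumes "finite J" "\<And>j. j \<in> J \<Longrightarrow> compact (F j)"
  shows "compact (msum J F)"
  unfolding msum_eq_sum[OF assms(1)] using assms
proof (induction J rule: finite_induct)
  case (insert j J)
  have "F j + sum F J = {x + y |x y. x \<in> F j \<and> y \<in> sum F J}"
    by (auto simp: set_plus_def)
  then show ?case
    using insert by (simp add: compact_sums)
qed simp

lemma convex_msum:
  fixes F :: "'i \<Rightarrow> (real^'n) set"
  shows "finite J \<Longrightarrow> (\<And>j. j \<in> J \<Longrightarrow> convex (F j)) \<Longrightarrow> convex (msum J F)"
  by (simp add: msum_eq_sum convex_set_sum)

lemma phi_msum:
  fixes F :: "'i \<Rightarrow> (real^'n) set"
  assumes "finite J" "\<And>j. j \<in> J \<Longrightarrow> compact (F j) \<and> F j \<noteq> {}"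
  shows "phi (msum J F) y = (\<Sum>j\<in>J. phi (F j) y)"
proof -
  have "\<exists>p. p \<in> F j \<and> phi (F j) y = - (p \<bullet> y)" if "j \<in> J" for j
    using phi_attained[of "F j" y] assms(2)[OF that] by metis
  then obtain p where p: "\<And>j. j \<in> J \<Longrightarrow> p j \<in> F j \<and> phi (F j) y = - (p j \<bullet> y)"
    by metis
  have "phi (msum J F) y = - ((\<Sum>j\<in>J. p j) \<bullet> y)"
  proof (rule phi_eqI)
    show "(\<Sum>j\<in>J. p j) \<in> msum J F"
      using p by (blast intro: msum_memI)
    fix q assume "q \<in> msum J F"
    then obtain x where x: "\<And>j. j \<in> J \<Longrightarrow> x j \<in> F j" "q = (\<Sum>j\<in>J. x j)"
      unfolding msum_def by blast
    have "p j \<bullet> y \<le> x j \<bullet> y" if "j \<in> J" for j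
      using neg_phi_le_inner[of "F j" "x j" y] assms(2) p x(1) that by auto
    then show "(\<Sum>j\<in>J. p j) \<bullet> y \<le> q \<bullet> y"
      by (simp add: x(2) inner_sum_left sum_mono)
  qed
  also have "\<dots> = (\<Sum>j\<in>J. phi (F j) y)"
    by (simp add: p inner_sum_left sum_negf)
  finally show ?thesis .
qed

lemma minface_msum:
  fixes F :: "'i \<Rightarrow> (real^'n) set"
  assumes "finite J" "\<And>j. j \<in> J \<Longrightarrow> compact (F j) \<and> F j \<noteq> {}"
  shows "minface (msum J F) y = msum J (\<lambda>j. minface (F j) y)"
proof (intro equalityI subsetI)
  fix q assume "q \<in> minface (msum J F) y"
  then have "q \<in> msum J F" and q: "q \<bullet> y = (\<Sum>j\<in>J. - phi (F j) y)"
    by (simp_all add: minface_phi phi_msum[OF assms] sum_negf)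
  from \<open>q \<in> msum J F\<close> obtain x where x: "\<And>j. j \<in> J \<Longrightarrow> x j \<in> F j" "q = (\<Sum>j\<in>J. x j)"
    unfolding msum_def by blast
  have le: "- phi (F j) y \<le> x j \<bullet> y" if "j \<in> J" for j
    using neg_phi_le_inner[of "F j" "x j" y] assms(2)[OF that] x(1)[OF that] by blast
  have sum_eq: "(\<Sum>j\<in>J. - phi (F j) y) = (\<Sum>j\<in>J. x j \<bullet> y)"
    using q by (simp add: x(2) inner_sum_left)
  have "- phi (F j) y = x j \<bullet> y" if "j \<in> J" for j
    using sum_mono_inv[OF sum_eq] le that assms(1) by blast
  with x show "q \<in> msum J (\<lambda>j. minface (F j) y)"
    unfolding x(2) by (intro msum_memI) (simp add: minface_phi)
next
  fix q assume "q \<in> msum J (\<lambda>j. minface (F j) y)"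
  then obtain x where x: "\<And>j. j \<in> J \<Longrightarrow> x j \<in> minface (F j) y" "q = (\<Sum>j\<in>J. x j)"
    unfolding msum_def by blast
  have "q \<bullet> y = (\<Sum>j\<in>J. x j \<bullet> y)"
    by (simp add: x(2) inner_sum_left)
  also have "\<dots> = (\<Sum>j\<in>J. - phi (F j) y)"
    using x(1) by (intro sum.cong) (auto simp: minface_phi)
  also have "\<dots> = - phi (msum J F) y"
    by (simp add: phi_msum[OF assms] sum_negf)
  finally have "q \<bullet> y = - phi (msum J F) y" .
  moreover have "q \<in> msum J F"
    unfolding x(2) using x(1) by (intro msum_memI) (simp add: minface_phi)
  ultimately show "q \<in> minface (msum J F) y"
    by (simp add: minface_phi)
qed

section \<open>Faces of polyhedra\<close>

lemma polyhedron_small_step: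
  fixes a :: "'k \<Rightarrow> 'a::real_inner"
  assumes "finite K" and feasible: "\<And>k. k \<in> K \<Longrightarrow> b k \<le> z \<bullet> a k"
    and active: "\<And>k. k \<in> K \<Longrightarrow> z \<bullet> a k = b k \<Longrightarrow> 0 \<le> u \<bullet> a k"
  obtains \<epsilon> where "\<epsilon> > 0" "\<And>k. k \<in> K \<Longrightarrow> b k \<le> (z + \<epsilon> *\<^sub>R u) \<bullet> a k"
proof -
  have ev: "\<forall>\<^sub>F \<epsilon> in at_right 0. b k \<le> (z + \<epsilon> *\<^sub>R u) \<bullet> a k" if "k \<in> K" for k
  proof (cases "z \<bullet> a k = b k")
    case True
    have "b k \<le> (z + \<epsilon> *\<^sub>R u) \<bullet> a k" if "0 < \<epsilon>" for \<epsilon>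
      using True active[OF \<open>k \<in> K\<close> True] that by (simp add: inner_add_left zero_le_mult_iff)
    then show ?thesis
      by (rule eventually_mono[OF eventually_at_right_less])
  next
    case False
    then have "b k < (z + 0 *\<^sub>R u) \<bullet> a k"
      using feasible[OF that] by simp
    moreover have "((\<lambda>\<epsilon>. (z + \<epsilon> *\<^sub>R u) \<bullet> a k) \<longlongrightarrow> (z + 0 *\<^sub>R u) \<bullet> a k) (at_right 0)"
      by (intro tendsto_intros)
    ultimately have "\<forall>\<^sub>F \<epsilon> in at_right 0. b k < (z + \<epsilon> *\<^sub>R u) \<bullet> a k"
      by (simp add: order_tendstoD(1))
    then show ?thesis
      by (rule eventually_mono) simp
  qed
  have "\<forall>\<^sub>F \<epsilon> in at_right (0::real). 0 < \<epsilon>"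
    by (rule eventually_at_right_less)
  moreover have "\<forall>\<^sub>F \<epsilon> in at_right 0. \<forall>k\<in>K. b k \<le> (z + \<epsilon> *\<^sub>R u) \<bullet> a k"
    using assms(1) ev by (intro eventually_ball_finite ballI)
  ultimately have "\<forall>\<^sub>F \<epsilon> in at_right 0. 0 < \<epsilon> \<and> (\<forall>k\<in>K. b k \<le> (z + \<epsilon> *\<^sub>R u) \<bullet> a k)"
    by (rule eventually_conj)
  then obtain \<epsilon> where "0 < \<epsilon>" "\<forall>k\<in>K. b k \<le> (z + \<epsilon> *\<^sub>R u) \<bullet> a k"
    using eventually_happens'[OF trivial_limit_at_right_real] by blast
  then show ?thesis
    using that by blast
qed

lemma farkas_convex_cone_hull:
  fixes y :: "'a::euclidean_space"
  assumes "finite A" "y \<notin> convex_cone hull A"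
  obtains u where "\<And>a. a \<in> A \<Longrightarrow> 0 \<le> u \<bullet> a" "u \<bullet> y < 0"
proof -
  obtain u c where uc: "u \<bullet> y < c" "\<And>x. x \<in> convex_cone hull A \<Longrightarrow> c < u \<bullet> x"
    using separating_hyperplane_closed_point[OF convex_convex_cone_hull
        closed_convex_cone_hull[OF assms(1)] assms(2)] by blast
  have c: "c < 0"
    using uc(2)[OF convex_cone_hull_contains_0] by simp
  have nonneg: "0 \<le> u \<bullet> a" if "a \<in> A" for a
  proof (rule ccontr)
    assume neg: "\<not> 0 \<le> u \<bullet> a"
    then have "(c / (u \<bullet> a)) *\<^sub>R a \<in> convex_cone hull A"
      using c that by (intro convex_cone_hull_mul hull_inc) (auto simp: divide_nonpos_neg)
    then have "c < u \<bullet> ((c / (u \<bullet> a)) *\<^sub>R a)"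
      by (rule uc(2))
    with neg show False
      by simp
  qed
  have "u \<bullet> y < 0"
    using uc(1) c by linarith
  then show ?thesis
    using that[OF nonneg] by blast
qed

lemma minimizer_in_active_normal_cone:
  fixes a :: "'k \<Rightarrow> 'a::euclidean_space"
  assumes "finite K" and feasible: "\<And>k. k \<in> K \<Longrightarrow> b k \<le> z \<bullet> a k"
    and minimal: "\<And>x. (\<And>k. k \<in> K \<Longrightarrow> b k \<le> x \<bullet> a k) \<Longrightarrow> z \<bullet> y \<le> x \<bullet> y"
  shows "y \<in> convex_cone hull (a ` {k \<in> K. z \<bullet> a k = b k})"
proof (rule ccontr)
  assume "y \<notin> convex_cone hull (a ` {k \<in> K. z \<bullet> a k = b k})"
  moreover have "finite (a ` {k \<in> K. z \<bullet> a k = b k})"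
    using assms(1) by simp
  ultimately obtain u where "\<And>c. c \<in> a ` {k \<in> K. z \<bullet> a k = b k} \<Longrightarrow> 0 \<le> u \<bullet> c" "u \<bullet> y < 0"
    using farkas_convex_cone_hull by metis
  then have u: "\<And>k. k \<in> K \<Longrightarrow> z \<bullet> a k = b k \<Longrightarrow> 0 \<le> u \<bullet> a k" "u \<bullet> y < 0"
    by auto
  obtain \<epsilon> where "\<epsilon> > 0" and \<epsilon>: "\<And>k. k \<in> K \<Longrightarrow> b k \<le> (z + \<epsilon> *\<^sub>R u) \<bullet> a k"
    using polyhedron_small_step[where a = a and b = b and z = z and u = u, OF assms(1) feasible u(1)]
    by blast
  have "z \<bullet> y \<le> (z + \<epsilon> *\<^sub>R u) \<bullet> y"
    by (rule minimal[OF \<epsilon>])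
  moreover have "(z + \<epsilon> *\<^sub>R u) \<bullet> y = z \<bullet> y + \<epsilon> * (u \<bullet> y)"
    by (simp add: inner_add_left)
  moreover have "\<epsilon> * (u \<bullet> y) < 0"
    using \<open>\<epsilon> > 0\<close> u(2) by (simp add: mult_pos_neg)
  ultimately show False
    by linarith
qed

lemma rel_interior_polyhedron_face:
  fixes a :: "'k \<Rightarrow> 'a::euclidean_space"
  assumes "finite K"
    and F: "F = {x. (\<forall>k\<in>K. b k \<le> x \<bullet> a k) \<and> x \<bullet> v = c}"
    and "z \<in> F"
    and active: "\<And>k q. k \<in> K \<Longrightarrow> z \<bullet> a k = b k \<Longrightarrow> q \<in> F \<Longrightarrow> q \<bullet> a k = b k"
  shows "z \<in> rel_interior F"
proof (rule convex_rel_interior_only_if)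
  have "F = (\<Inter>k\<in>K. {x. a k \<bullet> x \<ge> b k}) \<inter> {x. v \<bullet> x = c}"
    using F by (auto simp: inner_commute)
  then show "convex F"
    by (simp add: convex_INT convex_Int convex_halfspace_ge convex_hyperplane)
  show "F \<noteq> {}"
    using \<open>z \<in> F\<close> by blast
  show "\<forall>q\<in>F. \<exists>e>1. (1 - e) *\<^sub>R q + e *\<^sub>R z \<in> F"
  proof
    fix q assume "q \<in> F"
    have feasible: "b k \<le> z \<bullet> a k" if "k \<in> K" for k
      using \<open>z \<in> F\<close> F that by blast
    have "0 \<le> (z - q) \<bullet> a k" if "k \<in> K" "z \<bullet> a k = b k" for k
      using active[OF that \<open>q \<in> F\<close>] that(2) by (simp add: inner_diff_left)
    then obtain \<epsilon> where "\<epsilon> > 0" and \<epsilon>: "\<And>k. k \<in> K \<Longrightarrow> b k \<le> (z + \<epsilon> *\<^sub>R (z - q)) \<bullet> a k"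
      using polyhedron_small_step[where a = a and b = b and z = z and u = "z - q", OF assms(1) feasible]
      by blast
    have "(1 - (1 + \<epsilon>)) *\<^sub>R q + (1 + \<epsilon>) *\<^sub>R z = z + \<epsilon> *\<^sub>R (z - q)"
      by (simp add: algebra_simps)
    moreover have "(z + \<epsilon> *\<^sub>R (z - q)) \<bullet> v = c"
      using \<open>z \<in> F\<close> \<open>q \<in> F\<close> F by (simp add: inner_add_left inner_diff_left)
    ultimately show "\<exists>e>1. (1 - e) *\<^sub>R q + e *\<^sub>R z \<in> F"
      using \<open>\<epsilon> > 0\<close> \<epsilon> F by (intro exI[of _ "1 + \<epsilon>"]) auto
  qed
qed

lemma inner_eq_on_rel_interior:
  fixes F :: "'a::euclidean_space set"
  assumes "convex F" "\<And>q. q \<in> F \<Longrightarrow> c \<le> q \<bullet> y" "w \<in> rel_interior F" "w \<bullet> y = c" "q \<in> F"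
  shows "q \<bullet> y = c"
proof -
  have "F \<inter> {x. y \<bullet> x = c} face_of F"
    using assms(1,2) by (intro face_of_Int_supporting_hyperplane_ge) (auto simp: inner_commute)
  moreover have "w \<in> (F \<inter> {x. y \<bullet> x = c}) \<inter> rel_interior F"
    using assms(3,4) rel_interior_subset by (auto simp: inner_commute)
  ultimately have "F \<inter> {x. y \<bullet> x = c} = F"
    using face_of_disjoint_rel_interior by blast
  with assms(5) show ?thesis
    by (auto simp: inner_commute)
qed

lemma inner_eq_if_const_pairing:
  fixes F G :: "'a::real_inner set"
  assumes "\<And>q y. q \<in> F \<Longrightarrow> y \<in> G \<Longrightarrow> q \<bullet> y = c" "x0 \<in> F" "x \<in> F \<or> x0 + x \<in> F"
    "y1 \<in> G" "y2 \<in> G"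
  shows "x \<bullet> y1 = x \<bullet> y2"
  using assms(3)
proof
  assume "x0 + x \<in> F"
  then have "x0 \<bullet> y1 + x \<bullet> y1 = x0 \<bullet> y2 + x \<bullet> y2"
    using assms(1,2,4,5) by (metis inner_add_left)
  moreover have "x0 \<bullet> y1 = x0 \<bullet> y2"
    using assms(1,2,4,5) by metis
  ultimately show ?thesis
    by simp
qed (use assms in metis)

lemma aff_dim_add_1_eq_dim:
  fixes G :: "'a::euclidean_space set"
  assumes "0 \<notin> affine hull G"
  shows "aff_dim G + 1 = int (dim G)"
proof -
  have "aff_dim (insert 0 G) = aff_dim G + 1"
    using assms by (simp add: aff_dim_insert)
  moreover have "aff_dim (insert 0 G) = int (dim (insert 0 G))"
    by (simp add: aff_dim_zero hull_inc)
  ultimately show ?thesis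
    by (simp add: dim_insert span_zero)
qed

lemma dim_orthogonal_complement:
  fixes G :: "'a::euclidean_space set"
  shows "dim {u. \<forall>y\<in>G. u \<bullet> y = 0} + dim G = DIM('a)"
proof -
  have "u \<in> {u \<in> UNIV. \<forall>x\<in>span G. orthogonal x u} \<longleftrightarrow> (\<forall>y\<in>G. u \<bullet> y = 0)" for u
    using orthogonal_to_span[of _ G u] by (auto simp: orthogonal_def inner_commute intro: span_base)
  then have "{u. \<forall>y\<in>G. u \<bullet> y = 0} = {u \<in> UNIV. \<forall>x\<in>span G. orthogonal x u}"
    by blast
  moreover have "dim {u \<in> UNIV. \<forall>x\<in>span G. orthogonal x u} + dim (span G) = dim (UNIV :: 'a set)"
    by (rule dim_subspace_orthogonal_to_vectors) auto
  ultimately show ?thesis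
    by (simp add: dim_span)
qed

lemma aff_dim_add_of_dual_pair:
  fixes F G :: "'a::euclidean_space set"
  assumes "w \<in> F" "c \<noteq> 0"
    and inner: "\<And>q y. q \<in> F \<Longrightarrow> y \<in> G \<Longrightarrow> q \<bullet> y = c"
    and step: "\<And>u. (\<And>y. y \<in> G \<Longrightarrow> u \<bullet> y = 0) \<Longrightarrow> \<exists>\<epsilon>>0. w + \<epsilon> *\<^sub>R u \<in> F"
  shows "aff_dim F + aff_dim G = int DIM('a) - 1"
proof -
  define W where "W = {u. \<forall>y\<in>G. u \<bullet> y = 0}"
  define T where "T = (\<lambda>q. q - w) ` F"
  have "span T = W"
  proof (rule span_subspace)
    show "T \<subseteq> W"
      using assms(1) inner by (auto simp: T_def W_def inner_diff_left)
    show "W \<subseteq> span T"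
    proof
      fix u assume "u \<in> W"
      then obtain \<epsilon> where "\<epsilon> > 0" "w + \<epsilon> *\<^sub>R u \<in> F"
        using step unfolding W_def by blast
      then have "\<epsilon> *\<^sub>R u \<in> T"
        unfolding T_def by (metis add_diff_cancel_left' image_eqI)
      then have "(1 / \<epsilon>) *\<^sub>R (\<epsilon> *\<^sub>R u) \<in> span T"
        by (intro span_mul span_base)
      with \<open>\<epsilon> > 0\<close> show "u \<in> span T"
        by simp
    qed
    show "subspace W"
      unfolding W_def subspace_def by (auto simp: inner_add_left)
  qed
  have "aff_dim F = int (dim T)"
    using aff_dim_eq_dim_subtract[OF hull_inc[OF assms(1)]] by (simp add: T_def)
  also have "\<dots> = int (dim W)"
    using dim_span[of T] \<open>span T = W\<close> by simp
  finally have "aff_dim F = int (dim W)" .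
  moreover have "dim W + dim G = DIM('a)"
    unfolding W_def by (rule dim_orthogonal_complement)
  moreover have "aff_dim G + 1 = int (dim G)"
  proof (rule aff_dim_add_1_eq_dim)
    have "affine hull G \<subseteq> {y. w \<bullet> y = c}"
      using assms(1) inner by (intro hull_minimal) (auto simp: affine_hyperplane)
    with assms(2) show "0 \<notin> affine hull G"
      by auto
  qed
  ultimately show ?thesis
    by (simp add: algebra_simps flip: of_nat_add)
qed

lemma mem_closed_convex_if_below:
  fixes P :: "'a::euclidean_space set"
  assumes "closed P" "convex P" "\<And>f. \<exists>p\<in>P. f \<bullet> p \<le> f \<bullet> y"
  shows "y \<in> P"
proof (rule ccontr)
  assume "y \<notin> P"
  then obtain f b where "f \<bullet> y < b" "\<And>p. p \<in> P \<Longrightarrow> b < f \<bullet> p"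
    using separating_hyperplane_closed_point[OF assms(2,1)] by blast
  with assms(3)[of f] show False
    by force
qed

lemma supporting_hyperplane_not_interior:
  fixes S :: "'a::euclidean_space set"
  assumes "convex S" "x \<in> S" "x \<notin> interior S"
  obtains a where "a \<noteq> 0" "\<And>y. y \<in> S \<Longrightarrow> a \<bullet> x \<le> a \<bullet> y"
proof (cases "interior S = {}")
  case True
  then obtain a b where "a \<noteq> 0" "S \<subseteq> {y. a \<bullet> y = b}"
    using empty_interior_subset_hyperplane[OF assms(1)] by blast
  then have "a \<bullet> x \<le> a \<bullet> y" if "y \<in> S" for y
    using assms(2) that by (metis (mono_tags, lifting) mem_Collect_eq order.refl subsetD)
  with \<open>a \<noteq> 0\<close> show ?thesis
    using that by blast
next
  case False
  then have "x \<notin> rel_interior S"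
    using assms(3) by (simp add: rel_interior_nonempty_interior)
  with supporting_hyperplane_rel_boundary[OF assms(1,2)] that show ?thesis
    by metis
qed

section \<open>Primitive facet normals\<close>

lemma lattice_pt_inner_Ints: "lattice_pt x \<Longrightarrow> lattice_pt y \<Longrightarrow> x \<bullet> y \<in> \<int>"
  unfolding lattice_pt_def inner_vec_def by (auto intro!: Ints_sum Ints_mult)

lemma lattice_ptE:
  assumes "lattice_pt x"
  obtains X where "\<And>m. x $ m = of_int (X m)"
proof -
  have "\<forall>m. \<exists>z. x $ m = of_int z"
    using assms by (auto simp: lattice_pt_def elim: Ints_cases)
  with that show ?thesis
    by metis
qed

lemma primitive_scale_eq_1:
  fixes e u :: "real^'n"
  assumes "primitive e" "lattice_pt u" "coprime a b" "b > 0"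
    and eq: "of_int b *\<^sub>R u = of_int a *\<^sub>R e"
  shows "b = 1"
proof -
  obtain X where X: "\<And>m. e $ m = of_int (X m)"
    using assms(1) lattice_ptE primitive_def by blast
  obtain U where U: "\<And>m. u $ m = of_int (U m)"
    using assms(2) lattice_ptE by blast
  have "b dvd X m" for m
  proof -
    have "real_of_int (b * U m) = real_of_int (a * X m)"
      using arg_cong[OF eq, of "\<lambda>x. x $ m"] by (simp add: X U)
    then have "b dvd a * X m"
      by (metis dvd_triv_left of_int_eq_iff)
    with assms(3) show ?thesis
      by (simp add: coprime_commute coprime_dvd_mult_right_iff)
  qed
  then have "e = of_int b *\<^sub>R (\<chi> m. real_of_int (X m div b))"
    by (auto simp: vec_eq_iff X simp flip: of_int_mult)
  moreover have "lattice_pt (\<chi> m. real_of_int (X m div b))"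
    by (simp add: lattice_pt_def)
  ultimately show ?thesis
    using assms(1,4) unfolding primitive_def by auto
qed

lemma primitive_pos_parallel_eq:
  fixes e1 e2 :: "real^'n"
  assumes "primitive e1" "primitive e2" "e2 = c *\<^sub>R e1" "c > 0"
  shows "e2 = e1"
proof -
  obtain l where "e1 $ l \<noteq> 0"
    using assms(1) by (metis primitive_def vec_eq_iff zero_index)
  then have "c = e2 $ l / e1 $ l"
    using assms(3) by simp
  moreover have "e1 $ l \<in> \<rat>" "e2 $ l \<in> \<rat>"
    using assms(1,2) by (auto simp: primitive_def lattice_pt_def Ints_subset_Rats[THEN subsetD])
  ultimately have "c \<in> \<rat>"
    by simp
  then obtain a b :: int where ab: "b > 0" "coprime a b" "c = of_int a / of_int b"
    by (rule Rats_cases')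
  then have "a > 0"
    using assms(4) by (simp add: zero_less_divide_iff)
  have eq: "of_int b *\<^sub>R e2 = of_int a *\<^sub>R e1"
    using assms(3) ab(1,3) by simp
  have "b = 1"
    using primitive_scale_eq_1[OF assms(1) _ ab(2,1) eq] assms(2) by (simp add: primitive_def)
  moreover have "a = 1"
    using primitive_scale_eq_1[OF assms(2) _ _ \<open>a > 0\<close> eq[symmetric]] assms(1) ab(2)
    by (simp add: primitive_def coprime_commute)
  ultimately show ?thesis
    using assms(3) ab(3) by simp
qed

lemma parallel_of_orthogonal_hyperplane:
  fixes a e :: "'a::real_inner"
  assumes "a \<noteq> 0" "\<And>h. a \<bullet> h = 0 \<Longrightarrow> e \<bullet> h = 0"
  shows "e = ((e \<bullet> a) / (a \<bullet> a)) *\<^sub>R a"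
proof -
  define h where "h = e - ((e \<bullet> a) / (a \<bullet> a)) *\<^sub>R a"
  have "a \<bullet> h = 0"
    using assms(1) by (simp add: h_def inner_diff_right inner_commute)
  then have "h \<bullet> h = e \<bullet> h - ((e \<bullet> a) / (a \<bullet> a)) * (a \<bullet> h)"
    by (simp add: h_def inner_diff_left)
  also have "\<dots> = 0"
    using assms(2) \<open>a \<bullet> h = 0\<close> by simp
  finally show ?thesis
    by (simp add: h_def)
qed

lemma facet_normal_parallel:
  fixes P :: "(real^'n) set"
  assumes "compact P" "minface P e = F" "affine hull F = {x. a \<bullet> x = b}" "a \<noteq> 0"
    and "p \<in> F" "x \<in> P" "x \<notin> F"
  shows "e = ((e \<bullet> a) / (a \<bullet> a)) *\<^sub>R a" and "0 < (x - p) \<bullet> e"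
proof -
  have "F \<subseteq> {y. e \<bullet> y = e \<bullet> p}"
    using assms(2,5) by (auto simp: minface_phi inner_commute)
  then have hull_sub: "affine hull F \<subseteq> {y. e \<bullet> y = e \<bullet> p}"
    by (intro hull_minimal) (auto simp: affine_hyperplane)
  have "a \<bullet> p = b"
    using hull_inc[OF assms(5), of affine] unfolding assms(3) by simp
  have "e \<bullet> h = 0" if "a \<bullet> h = 0" for h
  proof -
    have "p + h \<in> affine hull F"
      unfolding assms(3) using \<open>a \<bullet> p = b\<close> that by (simp add: inner_add_right)
    then show ?thesis
      using hull_sub by (auto simp: inner_add_right)
  qed
  then show "e = ((e \<bullet> a) / (a \<bullet> a)) *\<^sub>R a"
    using parallel_of_orthogonal_hyperplane[OF assms(4)] by blast
  have "- phi P e \<le> x \<bullet> e" "x \<bullet> e \<noteq> - phi P e" "p \<bullet> e = - phi P e"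
    using neg_phi_le_inner[OF assms(1,6)] assms(2,5-7) by (auto simp: minface_phi)
  then show "0 < (x - p) \<bullet> e"
    by (simp add: inner_diff_left)
qed

lemma facet_normals_inj:
  fixes P :: "(real^'n) set"
  assumes "compact P" "aff_dim P = int CARD('n)"
    and e: "e1 \<in> facet_normals P" "e2 \<in> facet_normals P" and same: "minface P e1 = minface P e2"
  shows "e1 = e2"
proof -
  define F where "F = minface P e1"
  have "F facet_of P"
    using e(1) by (simp add: facet_normals_def F_def)
  then have "F face_of P" "F \<noteq> {}" and dimF: "aff_dim F = aff_dim P - 1"
    by (simp_all add: facet_of_def)
  then have "F \<subseteq> P" "F \<noteq> P"
    using face_of_imp_subset by auto
  have "aff_dim F = int DIM(real^'n) - 1"
    using dimF assms(2) by simp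
  then have "\<exists>a b. a \<noteq> 0 \<and> affine hull F = {x. a \<bullet> x = b}"
    using aff_dim_eq_hyperplane[of F] by simp
  then obtain a b where "a \<noteq> 0" and aff: "affine hull F = {x. a \<bullet> x = b}"
    by blast
  obtain p x where p: "p \<in> F" and x: "x \<in> P" "x \<notin> F"
    using \<open>F \<noteq> {}\<close> \<open>F \<subseteq> P\<close> \<open>F \<noteq> P\<close> by blast
  have e1: "e1 = ((e1 \<bullet> a) / (a \<bullet> a)) *\<^sub>R a" "0 < (x - p) \<bullet> e1"
    and e2: "e2 = ((e2 \<bullet> a) / (a \<bullet> a)) *\<^sub>R a" "0 < (x - p) \<bullet> e2"
    using facet_normal_parallel[OF assms(1) _ aff \<open>a \<noteq> 0\<close> p x] same by (simp_all add: F_def)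
  define c where "c = (e2 \<bullet> a) / (e1 \<bullet> a)"
  have "e1 \<noteq> 0"
    using e(1) by (simp add: facet_normals_def primitive_def)
  then have "e1 \<bullet> a \<noteq> 0"
    using e1(1) by force
  then have "c *\<^sub>R e1 = ((e2 \<bullet> a) / (a \<bullet> a)) *\<^sub>R a"
    by (subst e1(1)) (simp add: c_def)
  then have "e2 = c *\<^sub>R e1"
    using e2(1) by simp
  with e1(2) e2(2) have "c > 0"
    by (simp add: zero_less_mult_iff)
  moreover have "primitive e1" "primitive e2"
    using e by (simp_all add: facet_normals_def)
  ultimately show ?thesis
    using primitive_pos_parallel_eq \<open>e2 = c *\<^sub>R e1\<close> by metis
qed

lemma finite_facet_normals:
  fixes P :: "(real^'n) set"
  assumes "polytope P" "aff_dim P = int CARD('n)"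
  shows "finite (facet_normals P)"
proof -
  have "inj_on (minface P) (facet_normals P)"
    using facet_normals_inj[OF polytope_imp_compact[OF assms(1)] assms(2)] by (auto intro: inj_onI)
  moreover have "minface P ` facet_normals P \<subseteq> {F. F facet_of P}"
    by (auto simp: facet_normals_def)
  ultimately show ?thesis
    using finite_polytope_facets[OF assms(1)] by (metis finite_imageD finite_subset)
qed

section \<open>Nef-partitions\<close>

locale nef =
  fixes D :: "(real^'n) set" and r :: nat and Ds :: "nat \<Rightarrow> (real^'n) set"
  assumes nef_partition: "nef_partition D r Ds"
begin

abbreviation E :: "(real^'n) set" where "E \<equiv> facet_normals D"

abbreviation Nabla :: "nat \<Rightarrow> (real^'n) set" where "Nabla \<equiv> nabla D Ds"

lemma mem_D: "x \<in> D \<longleftrightarrow> (\<forall>e\<in>E. -1 \<le> x \<bullet> e)"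
proof -
  have "D = {x. \<forall>e\<in>E. -1 \<le> x \<bullet> e}"
    using nef_partition unfolding nef_partition_def reflexive_def by blast
  then show ?thesis
    by blast
qed

lemma aff_dim_D: "aff_dim D = int CARD('n)"
  using nef_partition unfolding nef_partition_def reflexive_def by blast

lemma D_msum: "D = msum {1..r} Ds"
  using nef_partition unfolding nef_partition_def by blast

lemma polytope_D: "polytope D"
  using nef_partition by (auto simp: nef_partition_def reflexive_def lattice_polytope_def polytope_def)

lemma compact_D: "compact D"
  by (rule polytope_imp_compact[OF polytope_D])

lemma D_nonempty: "D \<noteq> {}"
  using aff_dim_D by auto

lemma finite_E: "finite E"
  using finite_facet_normals[OF polytope_D aff_dim_D] .

lemma lattice_pt_E: "e \<in> E \<Longrightarrow> lattice_pt e"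
  by (simp add: facet_normals_def primitive_def)

lemma nonzero_E: "e \<in> E \<Longrightarrow> e \<noteq> 0"
  by (simp add: facet_normals_def primitive_def)

definition vertices :: "nat \<Rightarrow> (real^'n) set" where
  "vertices j = (SOME T. finite T \<and> Ds j = convex hull T)"

lemma vertices: "j \<in> {1..r} \<Longrightarrow> finite (vertices j) \<and> Ds j = convex hull (vertices j)"
  using nef_partition unfolding vertices_def nef_partition_def lattice_polytope_def
  by (metis (mono_tags, lifting) someI_ex)

lemma compact_Ds: "j \<in> {1..r} \<Longrightarrow> compact (Ds j)"
  using vertices finite_imp_compact_convex_hull by metis

lemma convex_Ds: "j \<in> {1..r} \<Longrightarrow> convex (Ds j)"
  using vertices convex_convex_hull by metis

lemma Ds_nonempty: "j \<in> {1..r} \<Longrightarrow> Ds j \<noteq> {}"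
  using D_nonempty D_msum by (auto simp: msum_def)

lemma Ds_compact_nonempty: "j \<in> {1..r} \<Longrightarrow> compact (Ds j) \<and> Ds j \<noteq> {}"
  using compact_Ds Ds_nonempty by blast

lemma neg_phi_le_inner_Ds: "j \<in> {1..r} \<Longrightarrow> x \<in> Ds j \<Longrightarrow> - phi (Ds j) y \<le> x \<bullet> y"
  using neg_phi_le_inner compact_Ds by blast

lemma phi_D_eq_sum: "phi D y = (\<Sum>j\<in>{1..r}. phi (Ds j) y)"
  using phi_msum[of "{1..r}" Ds] compact_Ds Ds_nonempty by (simp add: D_msum)

lemma zero_in_interior_D: "0 \<in> interior D"
proof -
  define U where "U = (\<Inter>e\<in>E. {x. -1 < e \<bullet> x})"
  have "open U"
    unfolding U_def using finite_E by (intro open_INT) (auto intro: open_halfspace_gt)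
  moreover have "U \<subseteq> D"
  proof
    fix x assume "x \<in> U"
    then have "-1 < e \<bullet> x" if "e \<in> E" for e
      using that by (simp add: U_def)
    then show "x \<in> D"
      unfolding mem_D by (metis inner_commute less_imp_le)
  qed
  ultimately have "U \<subseteq> interior D"
    by (simp add: interior_maximal)
  moreover have "0 \<in> U"
    by (simp add: U_def)
  ultimately show ?thesis
    by blast
qed

lemma nonneg_on_E_imp_zero:
  assumes "\<And>e. e \<in> E \<Longrightarrow> 0 \<le> a \<bullet> e"
  shows "a = 0"
proof (rule ccontr)
  assume "a \<noteq> 0"
  obtain M where M: "\<And>x. x \<in> D \<Longrightarrow> norm x \<le> M"
    using compact_imp_bounded[OF compact_D] by (auto simp: bounded_iff)
  define t where "t = (\<bar>M\<bar> + 1) / norm a"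
  have "t > 0"
    using \<open>a \<noteq> 0\<close> by (simp add: t_def)
  then have "t *\<^sub>R a \<in> D"
    using assms by (auto simp: mem_D intro: order_trans[of _ 0])
  then have "norm (t *\<^sub>R a) \<le> M"
    by (rule M)
  moreover have "norm (t *\<^sub>R a) = \<bar>M\<bar> + 1"
    using \<open>a \<noteq> 0\<close> \<open>t > 0\<close> by (simp add: t_def)
  ultimately show False
    by simp
qed

lemma phi_Ds_01: "j \<in> {1..r} \<Longrightarrow> e \<in> E \<Longrightarrow> phi (Ds j) e \<in> {0, 1}"
  using nef_partition unfolding nef_partition_def by blast

lemma phi_D_facet_normal:
  assumes "e \<in> E"
  shows "0 < phi D e" "phi D e \<le> 1"
proof -
  obtain p where "p \<in> D" "phi D e = - (p \<bullet> e)"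
    using phi_attained[OF compact_D D_nonempty] by blast
  with assms show "phi D e \<le> 1"
    by (auto simp: mem_D)
  obtain \<delta> where "\<delta> > 0" "ball 0 \<delta> \<subseteq> D"
    using zero_in_interior_D by (auto simp: mem_interior)
  then have "- (\<delta> / (2 * norm e)) *\<^sub>R e \<in> D"
    using nonzero_E[OF assms] by (auto simp: dist_norm)
  then have "- phi D e \<le> - (\<delta> / (2 * norm e)) * (e \<bullet> e)"
    using neg_phi_le_inner[OF compact_D] by fastforce
  moreover have "0 < (\<delta> / (2 * norm e)) * (e \<bullet> e)"
    using \<open>\<delta> > 0\<close> nonzero_E[OF assms] by simp
  ultimately show "0 < phi D e"
    by linarith
qed

lemma ex1_phi_Ds_eq_1:
  assumes "e \<in> E"
  shows "\<exists>!k. k \<in> {1..r} \<and> phi (Ds k) e = 1"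
proof -
  have "phi (Ds j) e = (if phi (Ds j) e = 1 then 1 else 0)" if "j \<in> {1..r}" for j
    using phi_Ds_01[OF that assms] by auto
  then have "phi D e = (\<Sum>j\<in>{1..r}. if phi (Ds j) e = 1 then 1 else 0)"
    unfolding phi_D_eq_sum by (rule sum.cong[OF refl])
  then have "phi D e = real (card {k \<in> {1..r}. phi (Ds k) e = 1})"
    by (simp add: sum.If_cases Int_def)
  with phi_D_facet_normal[OF assms] have "card {k \<in> {1..r}. phi (Ds k) e = 1} = 1"
    by linarith
  then obtain k where "{k \<in> {1..r}. phi (Ds k) e = 1} = {k}"
    by (auto simp: card_1_singleton_iff)
  then have "\<forall>k'. k' \<in> {1..r} \<and> phi (Ds k') e = 1 \<longleftrightarrow> k' = k"
    by blast
  then show ?thesis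
    by (intro ex1I[of _ k]) auto
qed

definition colour :: "real^'n \<Rightarrow> nat" where
  "colour e = (THE k. k \<in> {1..r} \<and> phi (Ds k) e = 1)"

lemma colour_in: "e \<in> E \<Longrightarrow> colour e \<in> {1..r}"
  and phi_Ds_colour: "e \<in> E \<Longrightarrow> phi (Ds (colour e)) e = 1"
  using theI'[OF ex1_phi_Ds_eq_1] by (auto simp: colour_def)

lemma phi_Ds_facet_normal:
  assumes "e \<in> E" "j \<in> {1..r}"
  shows "phi (Ds j) e = (if j = colour e then 1 else 0)"
proof (cases "j = colour e")
  case False
  then have "phi (Ds j) e \<noteq> 1"
    using ex1_phi_Ds_eq_1[OF assms(1)] colour_in[OF assms(1)] phi_Ds_colour[OF assms(1)] assms(2)
    by blast
  with False show ?thesis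
    using phi_Ds_01[OF assms(2,1)] by simp
qed (simp add: phi_Ds_colour assms(1))

lemma sum_times_phi_Ds: "e \<in> E \<Longrightarrow> (\<Sum>j\<in>{1..r}. c j * phi (Ds j) e) = c (colour e)"
  using colour_in by (simp add: phi_Ds_facet_normal if_distrib cong: if_cong)

lemma nabla_eq: "k \<in> {1..r} \<Longrightarrow> Nabla k = convex hull (insert 0 {e \<in> E. colour e = k})"
  by (auto simp: nabla_def phi_Ds_facet_normal split: if_splits intro!: arg_cong[where f = "\<lambda>S. convex hull S"])

lemma compact_Nabla: "k \<in> {1..r} \<Longrightarrow> compact (Nabla k)"
  using finite_E by (simp add: nabla_eq finite_imp_compact_convex_hull)

lemma convex_Nabla: "convex (Nabla k)"
  unfolding nabla_def by (rule convex_convex_hull)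

lemma zero_in_Nabla: "0 \<in> Nabla k"
  by (simp add: nabla_def hull_inc)

lemma Nabla_compact_nonempty: "k \<in> {1..r} \<Longrightarrow> compact (Nabla k) \<and> Nabla k \<noteq> {}"
  using compact_Nabla zero_in_Nabla by blast

lemma facet_normal_in_Nabla: "e \<in> E \<Longrightarrow> e \<in> Nabla (colour e)"
  using colour_in by (simp add: nabla_eq hull_inc)

lemma inner_Ds_Nabla:
  assumes "j \<in> {1..r}" "k \<in> {1..r}" "x \<in> Ds j" "y \<in> Nabla k"
  shows "- (if j = k then 1 else 0) \<le> x \<bullet> y"
proof -
  have "x \<bullet> e \<ge> - (if j = k then 1 else 0)" if "e \<in> E" "colour e = k" for e
    using neg_phi_le_inner_Ds[OF assms(1,3), of e] phi_Ds_facet_normal[OF that(1) assms(1)] that(2)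
    by simp
  then have "insert 0 {e \<in> E. colour e = k} \<subseteq> {y. x \<bullet> y \<ge> - (if j = k then 1 else 0)}"
    by auto
  then have "Nabla k \<subseteq> {y. x \<bullet> y \<ge> - (if j = k then 1 else 0)}"
    unfolding nabla_eq[OF assms(2)] by (rule hull_minimal) (rule convex_halfspace_ge)
  with assms(4) show ?thesis
    by blast
qed

lemma inner_msum_Ds_msum_Nabla:
  assumes "J \<subseteq> {1..r}" "L \<subseteq> {1..r}" "x \<in> msum J Ds" "y \<in> msum L Nabla"
  shows "- real (card (J \<inter> L)) \<le> x \<bullet> y"
proof -
  obtain xx where xx: "\<And>j. j \<in> J \<Longrightarrow> xx j \<in> Ds j" "x = (\<Sum>j\<in>J. xx j)"
    using assms(3) unfolding msum_def by blast
  obtain yy where yy: "\<And>k. k \<in> L \<Longrightarrow> yy k \<in> Nabla k" "y = (\<Sum>k\<in>L. yy k)"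
    using assms(4) unfolding msum_def by blast
  have fin: "finite J" "finite L"
    using assms(1,2) finite_subset by auto
  have "(\<Sum>j\<in>J. \<Sum>k\<in>L. - (if j = k then 1 else 0)) \<le> (\<Sum>j\<in>J. \<Sum>k\<in>L. xx j \<bullet> yy k)"
    using assms(1,2) xx(1) yy(1) by (intro sum_mono inner_Ds_Nabla) auto
  moreover have "(\<Sum>j\<in>J. \<Sum>k\<in>L. - (if j = k then 1 else 0 :: real)) = - real (card (J \<inter> L))"
    using fin by (simp add: sum_negf sum.If_cases Int_def)
  moreover have "x \<bullet> y = (\<Sum>j\<in>J. xx j \<bullet> y)"
    unfolding xx(2) by (rule inner_sum_left)
  moreover have "\<dots> = (\<Sum>j\<in>J. \<Sum>k\<in>L. xx j \<bullet> yy k)"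
    unfolding yy(2) by (simp add: inner_sum_right)
  ultimately show ?thesis
    by linarith
qed

lemma sum_phi_Ds: "e \<in> E \<Longrightarrow> (\<Sum>j\<in>{1..r}. phi (Ds j) e) = 1"
  using sum_times_phi_Ds[of e "\<lambda>_. 1"] by simp

lemma D_decomposition_tight:
  assumes "z \<in> D"
  obtains zz where "\<And>j. j \<in> {1..r} \<Longrightarrow> zz j \<in> Ds j" "z = (\<Sum>j\<in>{1..r}. zz j)"
    "\<And>e j. e \<in> E \<Longrightarrow> z \<bullet> e = -1 \<Longrightarrow> j \<in> {1..r} \<Longrightarrow> zz j \<bullet> e = - phi (Ds j) e"
proof -
  obtain zz where zz: "\<And>j. j \<in> {1..r} \<Longrightarrow> zz j \<in> Ds j" "z = (\<Sum>j\<in>{1..r}. zz j)"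
    using assms D_msum unfolding msum_def by blast
  have "zz j \<bullet> e = - phi (Ds j) e" if "e \<in> E" "z \<bullet> e = -1" "j \<in> {1..r}" for e j
  proof -
    have sum_eq: "(\<Sum>j\<in>{1..r}. - phi (Ds j) e) = (\<Sum>j\<in>{1..r}. zz j \<bullet> e)"
      using that(1,2) sum_phi_Ds by (simp add: zz(2) inner_sum_left sum_negf)
    have "- phi (Ds j) e \<le> zz j \<bullet> e" if "j \<in> {1..r}" for j
      using neg_phi_le_inner_Ds[OF that zz(1)[OF that]] .
    then show ?thesis
      using sum_mono_inv[OF sum_eq] that(3) by force
  qed
  with zz that show ?thesis
    by blast
qed

lemma inner_msum_scaled_Ds_ge:
  assumes c: "\<And>j. j \<in> {1..r} \<Longrightarrow> 0 \<le> c j"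
    and "x \<in> msum {1..r} (\<lambda>j. (\<lambda>y. c j *\<^sub>R y) ` Ds j)" "e \<in> E"
  shows "- c (colour e) \<le> x \<bullet> e"
proof -
  obtain xx where xx: "\<And>j. j \<in> {1..r} \<Longrightarrow> xx j \<in> Ds j" "x = (\<Sum>j\<in>{1..r}. c j *\<^sub>R xx j)"
    using msum_scaled_memE[OF assms(2)] by blast
  have "(\<Sum>j\<in>{1..r}. c j * - phi (Ds j) e) \<le> (\<Sum>j\<in>{1..r}. c j * (xx j \<bullet> e))"
    using c neg_phi_le_inner_Ds xx(1) by (intro sum_mono mult_left_mono) auto
  then show ?thesis
    using sum_times_phi_Ds[OF assms(3), of c] by (simp add: xx(2) inner_sum_left sum_negf)
qed

(* Minimise f over D at z = z_1 + ... + z_r and write f as a nonnegative combination of the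
   facet normals tight at z; on these normals c_1 z_1 + ... + c_r z_r is tight as well. *)
lemma msum_scaled_Ds_below:
  assumes c: "\<And>j. j \<in> {1..r} \<Longrightarrow> 0 \<le> c j"
    and x: "\<And>e. e \<in> E \<Longrightarrow> - c (colour e) \<le> x \<bullet> e"
  obtains p where "p \<in> msum {1..r} (\<lambda>j. (\<lambda>y. c j *\<^sub>R y) ` Ds j)" "f \<bullet> p \<le> f \<bullet> x"
proof -
  obtain z where z: "z \<in> D" "\<And>q. q \<in> D \<Longrightarrow> z \<bullet> f \<le> q \<bullet> f"
    using phi_attained[OF compact_D D_nonempty] by blast
  have "f \<in> convex_cone hull (id ` {e \<in> E. z \<bullet> id e = -1})"
    using z mem_D finite_E
    by (intro minimizer_in_active_normal_cone[where b = "\<lambda>_. -1"]) auto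
  then have f: "f \<in> convex_cone hull {e \<in> E. z \<bullet> e = -1}"
    by simp
  obtain zz where zz: "\<And>j. j \<in> {1..r} \<Longrightarrow> zz j \<in> Ds j"
    "\<And>e j. e \<in> E \<Longrightarrow> z \<bullet> e = -1 \<Longrightarrow> j \<in> {1..r} \<Longrightarrow> zz j \<bullet> e = - phi (Ds j) e"
    using D_decomposition_tight[OF z(1)] by blast
  define p where "p = (\<Sum>j\<in>{1..r}. c j *\<^sub>R zz j)"
  have "{e \<in> E. z \<bullet> e = -1} \<subseteq> {e. (x - p) \<bullet> e \<ge> 0}"
  proof
    fix e assume e: "e \<in> {e \<in> E. z \<bullet> e = -1}"
    have "p \<bullet> e = (\<Sum>j\<in>{1..r}. c j * (zz j \<bullet> e))"
      by (simp add: p_def inner_sum_left)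
    also have "\<dots> = - (\<Sum>j\<in>{1..r}. c j * phi (Ds j) e)"
      using zz(2) e by (simp add: sum_negf)
    also have "\<dots> = - c (colour e)"
      using e sum_times_phi_Ds by simp
    finally show "e \<in> {e. (x - p) \<bullet> e \<ge> 0}"
      using x e by (simp add: inner_diff_left)
  qed
  then have "convex_cone hull {e \<in> E. z \<bullet> e = -1} \<subseteq> {e. (x - p) \<bullet> e \<ge> 0}"
    by (rule hull_minimal) (rule convex_cone_halfspace_ge)
  with f have "0 \<le> (x - p) \<bullet> f"
    by blast
  then have "f \<bullet> p \<le> f \<bullet> x"
    using inner_commute[of f p] inner_commute[of f x] by (simp add: inner_diff_left)
  moreover have "p \<in> msum {1..r} (\<lambda>j. (\<lambda>y. c j *\<^sub>R y) ` Ds j)"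
    unfolding p_def using zz(1) by (intro msum_memI) auto
  ultimately show ?thesis
    using that by blast
qed

lemma msum_scaled_Ds_eq:
  assumes c: "\<And>j. j \<in> {1..r} \<Longrightarrow> 0 \<le> c j"
  shows "msum {1..r} (\<lambda>j. (\<lambda>y. c j *\<^sub>R y) ` Ds j) = {x. \<forall>e\<in>E. - c (colour e) \<le> x \<bullet> e}"
    (is "?L = ?R")
proof
  show "?L \<subseteq> ?R"
    using inner_msum_scaled_Ds_ge[where c = c, OF c] by blast
  show "?R \<subseteq> ?L"
  proof
    fix x assume "x \<in> ?R"
    show "x \<in> ?L"
    proof (rule mem_closed_convex_if_below)
      show "closed ?L"
        by (intro compact_imp_closed compact_msum compact_scaling compact_Ds) auto
      show "convex ?L"
        by (intro convex_msum convex_scaling convex_Ds) auto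
      show "\<exists>p\<in>?L. f \<bullet> p \<le> f \<bullet> x" for f
        using msum_scaled_Ds_below[where c = c and x = x and f = f, OF c] \<open>x \<in> ?R\<close> by blast
    qed
  qed
qed

lemma msum_Ds_eq:
  assumes "J \<subseteq> {1..r}"
  shows "msum J Ds = {x. \<forall>e\<in>E. - (if colour e \<in> J then 1 else 0) \<le> x \<bullet> e}"
proof -
  have "finite J"
    using assms finite_subset by blast
  have "(\<Sum>j\<in>{1..r}. (\<lambda>y. (if j \<in> J then 1 else 0) *\<^sub>R y) ` Ds j) = (\<Sum>j\<in>J. Ds j)"
    using assms Ds_nonempty by (intro sum.mono_neutral_cong_right) (auto simp: image_constant_conv)
  then have "msum J Ds = msum {1..r} (\<lambda>j. (\<lambda>y. (if j \<in> J then 1 else 0) *\<^sub>R y) ` Ds j)"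
    using \<open>finite J\<close> by (simp add: msum_eq_sum)
  also have "\<dots> = {x. \<forall>e\<in>E. - (if colour e \<in> J then 1 else 0) \<le> x \<bullet> e}"
    by (rule msum_scaled_Ds_eq) simp
  finally show ?thesis .
qed

lemma Ds_eq: "j \<in> {1..r} \<Longrightarrow> Ds j = {x. \<forall>e\<in>E. - (if colour e = j then 1 else 0) \<le> x \<bullet> e}"
  using msum_Ds_eq[of "{j}"] by simp

lemma zero_in_Ds: "j \<in> {1..r} \<Longrightarrow> 0 \<in> Ds j"
  by (subst Ds_eq) auto

lemma neg_phi_msum_Nabla_le:
  assumes "L \<subseteq> {1..r}"
    and y: "\<And>j x. j \<in> {1..r} \<Longrightarrow> x \<in> vertices j \<Longrightarrow> - (if j \<in> L then 1 else 0) \<le> y \<bullet> x"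
  shows "- phi (msum L Nabla) f \<le> f \<bullet> y"
proof -
  have y_Ds: "- (if j \<in> L then 1 else 0) \<le> x \<bullet> y" if "j \<in> {1..r}" "x \<in> Ds j" for j x
  proof -
    have "vertices j \<subseteq> {x. y \<bullet> x \<ge> - (if j \<in> L then 1 else 0)}"
      using y that(1) by blast
    then have "convex hull vertices j \<subseteq> {x. y \<bullet> x \<ge> - (if j \<in> L then 1 else 0)}"
      by (rule hull_minimal) (rule convex_halfspace_ge)
    then show ?thesis
      using that vertices by (auto simp: inner_commute)
  qed
  define c where "c k = phi (Nabla k) f" for k
  have c: "0 \<le> c k" if "k \<in> {1..r}" for k
    using neg_phi_le_inner[OF compact_Nabla[OF that] zero_in_Nabla] by (simp add: c_def)
  have "- c (colour e) \<le> f \<bullet> e" if "e \<in> E" for e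
    using neg_phi_le_inner[OF compact_Nabla[OF colour_in[OF that]] facet_normal_in_Nabla[OF that], of f]
    by (simp add: c_def inner_commute)
  then have "f \<in> {x. \<forall>e\<in>E. - c (colour e) \<le> x \<bullet> e}"
    by blast
  also have "\<dots> = msum {1..r} (\<lambda>j. (\<lambda>x. c j *\<^sub>R x) ` Ds j)"
    by (rule msum_scaled_Ds_eq[symmetric]) (simp add: c)
  finally have "f \<in> msum {1..r} (\<lambda>j. (\<lambda>x. c j *\<^sub>R x) ` Ds j)" .
  from msum_scaled_memE[OF this]
  obtain ff where ff: "\<And>j. j \<in> {1..r} \<Longrightarrow> ff j \<in> Ds j" "f = (\<Sum>j\<in>{1..r}. c j *\<^sub>R ff j)"
    by blast
  have "phi (msum L Nabla) f = (\<Sum>j\<in>L. c j)"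
    unfolding c_def using assms(1) finite_subset[OF assms(1)] compact_Nabla zero_in_Nabla
    by (intro phi_msum) auto
  also have "\<dots> = (\<Sum>j\<in>{1..r}. if j \<in> L then c j else 0)"
    using assms(1) by (simp add: sum.inter_restrict[symmetric] Int_absorb1)
  finally have "- phi (msum L Nabla) f = (\<Sum>j\<in>{1..r}. c j * - (if j \<in> L then 1 else 0))"
    by (simp add: sum_negf[symmetric] if_distrib cong: if_cong)
  also have "\<dots> \<le> (\<Sum>j\<in>{1..r}. c j * (ff j \<bullet> y))"
    using c y_Ds ff(1) by (intro sum_mono mult_left_mono) auto
  also have "\<dots> = f \<bullet> y"
    by (simp add: ff(2) inner_sum_left)
  finally show ?thesis .
qed

lemma msum_Nabla_eq:
  assumes "L \<subseteq> {1..r}"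
  shows "msum L Nabla = {y. \<forall>j\<in>{1..r}. \<forall>x\<in>vertices j. - (if j \<in> L then 1 else 0) \<le> y \<bullet> x}"
    (is "?L = ?R")
proof
  show "?L \<subseteq> ?R"
  proof (safe)
    fix y j x assume "y \<in> ?L" "j \<in> {1..r}" "x \<in> vertices j"
    then have "x \<in> msum {j} Ds"
      using vertices hull_inc by fastforce
    then have "- real (card ({j} \<inter> L)) \<le> x \<bullet> y"
      using inner_msum_Ds_msum_Nabla[of "{j}" L x y] assms \<open>y \<in> ?L\<close> \<open>j \<in> {1..r}\<close> by blast
    then show "- (if j \<in> L then 1 else 0) \<le> y \<bullet> x"
      by (cases "j \<in> L") (auto simp: inner_commute)
  qed
  show "?R \<subseteq> ?L"
  proof
    fix y assume "y \<in> ?R"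
    have "finite L"
      using assms finite_subset by blast
    have cpt: "compact ?L" "?L \<noteq> {}"
      using \<open>finite L\<close> assms compact_Nabla zero_in_Nabla
      by (auto intro!: compact_msum msum_nonempty)
    show "y \<in> ?L"
    proof (rule mem_closed_convex_if_below)
      show "closed ?L"
        using cpt(1) by (rule compact_imp_closed)
      show "convex ?L"
        using \<open>finite L\<close> convex_Nabla by (rule convex_msum)
      show "\<exists>p\<in>?L. f \<bullet> p \<le> f \<bullet> y" for f
      proof -
        obtain p where "p \<in> ?L" "phi ?L f = - (p \<bullet> f)"
          using phi_attained[OF cpt] by blast
        moreover have "- phi ?L f \<le> f \<bullet> y"
          using neg_phi_msum_Nabla_le[OF assms] \<open>y \<in> ?R\<close> by blast
        ultimately show ?thesis
          by (auto simp: inner_commute)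
      qed
    qed
  qed
qed

(* The witness is a supporting functional of conv E at v, rescaled. *)
lemma frontier_dual_polytope_imp_inner_eq_neg1:
  assumes "v \<in> frontier (convex hull E)"
  obtains x where "x \<in> D" "x \<bullet> v = -1"
proof -
  have "closed (convex hull E)"
    using finite_E by (simp add: compact_imp_closed finite_imp_compact_convex_hull)
  then have "v \<in> convex hull E" "v \<notin> interior (convex hull E)"
    using assms by (auto simp: frontier_def)
  then obtain f where "f \<noteq> 0" and f: "\<And>y. y \<in> convex hull E \<Longrightarrow> f \<bullet> v \<le> f \<bullet> y"
    using supporting_hyperplane_not_interior[OF convex_convex_hull] by blast
  have fE: "f \<bullet> v \<le> f \<bullet> e" if "e \<in> E" for e
    using f hull_inc[OF that] by blast
  have "f \<bullet> v < 0"
  proof (rule ccontr)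
    assume "\<not> f \<bullet> v < 0"
    then have "f = 0"
      using fE by (intro nonneg_on_E_imp_zero) fastforce
    with \<open>f \<noteq> 0\<close> show False ..
  qed
  define x where "x = (1 / - (f \<bullet> v)) *\<^sub>R f"
  have "x \<in> D"
    unfolding mem_D
  proof
    fix e assume "e \<in> E"
    have "x \<bullet> e = (f \<bullet> e) / - (f \<bullet> v)"
      by (simp add: x_def)
    then show "-1 \<le> x \<bullet> e"
      using fE[OF \<open>e \<in> E\<close>] \<open>f \<bullet> v < 0\<close> by (simp add: le_divide_eq)
  qed
  moreover have "x \<bullet> v = -1"
    using \<open>f \<bullet> v < 0\<close> by (simp add: x_def)
  ultimately show ?thesis
    using that by blast
qed

lemma phi_Ds_nabla0:
  assumes "i \<in> {1..r}" "v \<in> nabla0 D Ds i" "j \<in> {1..r}"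
  shows "phi (Ds j) v = (if j = i then 1 else 0)"
proof -
  have v: "v \<in> Nabla i" "v \<in> frontier (convex hull E)"
    using assms(2) by (auto simp: nabla0_def dual_polytope_def)
  obtain x where "x \<in> D" "x \<bullet> v = -1"
    using frontier_dual_polytope_imp_inner_eq_neg1[OF v(2)] by blast
  then obtain xx where xx: "\<And>j. j \<in> {1..r} \<Longrightarrow> xx j \<in> Ds j" "x = (\<Sum>j\<in>{1..r}. xx j)"
    using D_msum unfolding msum_def by blast
  have low: "- (if j = i then 1 else 0) \<le> q \<bullet> v" if "j \<in> {1..r}" "q \<in> Ds j" for j q
    using inner_Ds_Nabla[OF that(1) assms(1) that(2) v(1)] .
  have "(\<Sum>j\<in>{1..r}. - (if j = i then 1 else 0)) = (\<Sum>j\<in>{1..r}. xx j \<bullet> v)"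
    using assms(1) \<open>x \<bullet> v = -1\<close> by (simp add: xx(2) inner_sum_left sum_negf)
  then have "xx j \<bullet> v = - (if j = i then 1 else 0)"
    using sum_mono_inv[OF _ low[OF _ xx(1)]] assms(3) by force
  then show ?thesis
    using phi_eqI[of "xx j" "Ds j" v] xx(1)[OF assms(3)] low[OF assms(3)] by simp
qed

lemma r_pos: "0 < r"
proof (rule ccontr)
  assume "\<not> 0 < r"
  then have "D = {0}"
    using D_msum by (simp add: msum_def)
  then show False
    using aff_dim_D by simp
qed

lemma zero_in_interior_nabla_dual: "0 \<in> interior (nabla_dual r Ds)"
proof -
  let ?U = "(\<lambda>x. real r *\<^sub>R x) -` interior D"
  have "?U \<subseteq> nabla_dual r Ds"
  proof
    fix x assume "x \<in> ?U"
    then have "real r *\<^sub>R x \<in> D"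
      using interior_subset by blast
    then obtain xx where xx: "\<And>j. j \<in> {1..r} \<Longrightarrow> xx j \<in> Ds j" "real r *\<^sub>R x = (\<Sum>j\<in>{1..r}. xx j)"
      using D_msum unfolding msum_def by blast
    have "x = (\<Sum>j\<in>{1..r}. (1 / real r) *\<^sub>R xx j)"
      using r_pos arg_cong[OF xx(2), of "\<lambda>y. (1 / real r) *\<^sub>R y"] by (simp add: scaleR_sum_right)
    also have "\<dots> \<in> convex hull (\<Union>j\<in>{1..r}. Ds j)"
    proof (rule convex_sum)
      show "xx j \<in> convex hull (\<Union>j\<in>{1..r}. Ds j)" if "j \<in> {1..r}" for j
        using xx(1)[OF that] that by (blast intro: hull_inc)
    qed (use r_pos in auto)
    finally show "x \<in> nabla_dual r Ds"
      by (simp add: nabla_dual_def)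
  qed
  moreover have "open ?U"
    by (intro continuous_open_vimage open_interior continuous_intros)
  moreover have "0 \<in> ?U"
    using zero_in_interior_D by simp
  ultimately show ?thesis
    using interior_maximal by blast
qed

definition vertex_index :: "(nat \<times> (real^'n)) set" where
  "vertex_index = (SIGMA j:{1..r}. vertices j)"

lemma finite_vertex_index: "finite vertex_index"
  unfolding vertex_index_def using vertices by (intro finite_SigmaI) auto

lemma vertex_indexE:
  assumes "k \<in> vertex_index"
  obtains j x where "k = (j, x)" "j \<in> {1..r}" "x \<in> Ds j"
proof -
  obtain j x where jx: "k = (j, x)" "j \<in> {1..r}" "x \<in> vertices j"
    using assms unfolding vertex_index_def by blast
  then have "x \<in> Ds j"
    using vertices[OF jx(2)] hull_inc[OF jx(3)] by blast
  with jx that show ?thesis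
    by blast
qed

lemma phi_Nabla_Ints:
  assumes "k \<in> {1..r}" "lattice_pt w"
  shows "phi (Nabla k) w \<in> \<int>"
proof -
  obtain s where s: "s \<in> insert 0 {e \<in> E. colour e = k}" "phi (Nabla k) w = - (s \<bullet> w)"
    using phi_convex_hull_attained[of "insert 0 {e \<in> E. colour e = k}" w] finite_E nabla_eq[OF assms(1)]
    by auto
  have "lattice_pt s"
    using s(1) lattice_pt_E by (auto simp: lattice_pt_def)
  then have "s \<bullet> w \<in> \<int>"
    using assms(2) by (rule lattice_pt_inner_Ints)
  with s(2) show ?thesis
    by simp
qed

lemma phi_Nabla_nonneg: "k \<in> {1..r} \<Longrightarrow> 0 \<le> phi (Nabla k) w"
  using neg_phi_le_inner[OF compact_Nabla zero_in_Nabla, of k w] by simp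

lemma phi_Nabla_le_1:
  assumes "k \<in> {1..r}" "w \<in> Ds k"
  shows "phi (Nabla k) w \<le> 1"
proof -
  have "Nabla k \<noteq> {}"
    using zero_in_Nabla by blast
  then obtain p where "p \<in> Nabla k" "phi (Nabla k) w = - (p \<bullet> w)"
    using phi_attained[OF compact_Nabla[OF assms(1)]] by blast
  then show ?thesis
    using inner_Ds_Nabla[OF assms(1,1,2)] by (simp add: inner_commute)
qed

lemma phi_Nabla_eq_0_imp_zero:
  assumes "k \<in> {1..r}" "w \<in> Ds k" "phi (Nabla k) w = 0"
  shows "w = 0"
proof (rule nonneg_on_E_imp_zero)
  fix e assume "e \<in> E"
  show "0 \<le> w \<bullet> e"
  proof (cases "colour e = k")
    case True
    then show ?thesis
      using neg_phi_le_inner[OF compact_Nabla[OF assms(1)], of e w] facet_normal_in_Nabla[OF \<open>e \<in> E\<close>]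
        assms(3) by (simp add: inner_commute)
  next
    case False
    have "- (if colour e = k then 1 else 0) \<le> w \<bullet> e"
      using assms(2) \<open>e \<in> E\<close> unfolding Ds_eq[OF assms(1)] by blast
    with False show ?thesis
      by simp
  qed
qed

end

section \<open>Dual faces\<close>

locale nef_face = nef D r Ds for D :: "(real^'n) set" and r Ds +
  fixes i :: nat and J :: "nat set" and v :: "real^'n"
  assumes i_in_J: "i \<in> J" and J_subset: "J \<subseteq> {1..r}" and v_in_nabla0: "v \<in> nabla0 D Ds i"
begin

definition Jc :: "nat set" where "Jc = insert i ({1..r} - J)"

definition Delta_J :: "(real^'n) set" where "Delta_J = msum J Ds"

definition Nabla_Jc :: "(real^'n) set" where "Nabla_Jc = msum Jc Nabla"

definition Delta_face :: "(real^'n) set" where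
  "Delta_face = msum J (\<lambda>j. minface (Ds j) v)"

definition Nabla_face :: "real^'n \<Rightarrow> (real^'n) set" where
  "Nabla_face w = mplus (minface (Nabla i) w) (msum ({1..r} - J) (\<lambda>j. minface (Nabla j) w))"

lemma i_in: "i \<in> {1..r}"
  using i_in_J J_subset by blast

lemma finite_J: "finite J"
  using J_subset finite_subset by blast

lemma Jc_subset: "Jc \<subseteq> {1..r}" and finite_Jc: "finite Jc" and i_in_Jc: "i \<in> Jc"
  using i_in by (auto simp: Jc_def)

lemma J_Int_Jc: "J \<inter> Jc = {i}"
  using i_in_J by (auto simp: Jc_def)

lemma v_in_Nabla: "v \<in> Nabla i"
  using v_in_nabla0 by (simp add: nabla0_def)

lemma phi_Ds_v: "j \<in> {1..r} \<Longrightarrow> phi (Ds j) v = (if j = i then 1 else 0)"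
  using phi_Ds_nabla0[OF i_in v_in_nabla0] .

lemma Delta_J_eq: "Delta_J = {x. \<forall>e\<in>E. - (if colour e \<in> J then 1 else 0) \<le> x \<bullet> e}"
  unfolding Delta_J_def by (rule msum_Ds_eq[OF J_subset])

lemma convex_Delta_J: "convex Delta_J"
  unfolding Delta_J_def using finite_J J_subset convex_Ds by (intro convex_msum) auto

lemma convex_Nabla_Jc: "convex Nabla_Jc"
  unfolding Nabla_Jc_def using finite_Jc convex_Nabla by (rule convex_msum)

lemma inner_Delta_J_Nabla_Jc: "q \<in> Delta_J \<Longrightarrow> y \<in> Nabla_Jc \<Longrightarrow> -1 \<le> q \<bullet> y"
  using inner_msum_Ds_msum_Nabla[OF J_subset Jc_subset] J_Int_Jc by (simp add: Delta_J_def Nabla_Jc_def)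

lemma Ds_i_subset_Delta_J: "Ds i \<subseteq> Delta_J"
proof
  fix x assume "x \<in> Ds i"
  moreover have "\<And>k. k \<in> J - {i} \<Longrightarrow> 0 \<in> Ds k"
    using J_subset zero_in_Ds by blast
  ultimately show "x \<in> Delta_J"
    unfolding Delta_J_def by (intro msum_memI_single[OF finite_J i_in_J])
qed

lemma v_in_Nabla_Jc: "v \<in> Nabla_Jc"
  unfolding Nabla_Jc_def using zero_in_Nabla v_in_Nabla
  by (intro msum_memI_single[OF finite_Jc i_in_Jc])

lemma Delta_face_eq: "Delta_face = {q \<in> Delta_J. q \<bullet> v = -1}"
proof -
  have "phi Delta_J v = (\<Sum>j\<in>J. phi (Ds j) v)"
    unfolding Delta_J_def using finite_J J_subset Ds_compact_nonempty by (intro phi_msum) auto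
  also have "\<dots> = (\<Sum>j\<in>J. if j = i then 1 else 0)"
    using J_subset phi_Ds_v by (intro sum.cong) auto
  also have "\<dots> = 1"
    using finite_J i_in_J by simp
  finally have "phi Delta_J v = 1" .
  moreover have "Delta_face = minface Delta_J v"
    unfolding Delta_face_def Delta_J_def using finite_J J_subset Ds_compact_nonempty
    by (intro minface_msum[symmetric]) auto
  ultimately show ?thesis
    by (simp add: minface_phi)
qed

lemma convex_Delta_face: "convex Delta_face"
  unfolding Delta_face_eq using convex_Int[OF convex_Delta_J convex_hyperplane[of v "-1"]]
  by (simp add: Int_def inner_commute)

lemma Delta_face_subset: "Delta_face \<subseteq> Delta_J"
  by (auto simp: Delta_face_eq)

lemma zero_in_minface_Ds_v: "j \<in> J - {i} \<Longrightarrow> 0 \<in> minface (Ds j) v"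
  using J_subset zero_in_Ds phi_Ds_v by (auto simp: minface_phi)

lemma Delta_face_memI: "x \<in> minface (Ds i) v \<Longrightarrow> x \<in> Delta_face"
  unfolding Delta_face_def using zero_in_minface_Ds_v
  by (intro msum_memI_single[OF finite_J i_in_J])

lemma Delta_face_add_memI:
  "x0 \<in> minface (Ds i) v \<Longrightarrow> j \<in> J - {i} \<Longrightarrow> x \<in> minface (Ds j) v \<Longrightarrow> x0 + x \<in> Delta_face"
  unfolding Delta_face_def using zero_in_minface_Ds_v
  by (intro msum_memI_pair[OF finite_J i_in_J]) auto

lemma minface_Ds_i_v_nonempty: "minface (Ds i) v \<noteq> {}"
  by (rule minface_nonempty[OF compact_Ds[OF i_in] Ds_nonempty[OF i_in]])

lemma Nabla_face_msum: "Nabla_face w = msum Jc (\<lambda>k. minface (Nabla k) w)"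
  unfolding Nabla_face_def Jc_def using i_in_J finite_J by (subst msum_insert) auto

lemma Nabla_face_eq_minface: "Nabla_face w = minface Nabla_Jc w"
  unfolding Nabla_face_msum Nabla_Jc_def using finite_Jc Jc_subset Nabla_compact_nonempty
  by (intro minface_msum[symmetric]) auto

lemma convex_Nabla_face: "convex (Nabla_face w)"
  unfolding Nabla_face_eq_minface by (rule convex_minface[OF convex_Nabla_Jc])

lemma phi_Nabla_outside_J: "w \<in> Delta_J \<Longrightarrow> k \<in> {1..r} - J \<Longrightarrow> phi (Nabla k) w = 0"
  using inner_msum_Ds_msum_Nabla[OF J_subset, of "{k}" w] zero_in_Nabla
  by (intro phi_eqI[of 0, simplified]) (auto simp: Delta_J_def inner_commute)

lemma phi_Nabla_Jc: "w \<in> Delta_J \<Longrightarrow> phi Nabla_Jc w = phi (Nabla i) w"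
  unfolding Nabla_Jc_def using finite_Jc Jc_subset Nabla_compact_nonempty
  by (subst phi_msum) (auto simp: Jc_def i_in_J phi_Nabla_outside_J)

lemma Nabla_face_eq: "w \<in> Delta_J \<Longrightarrow> phi (Nabla i) w = 1 \<Longrightarrow> Nabla_face w = {y \<in> Nabla_Jc. y \<bullet> w = -1}"
  by (simp add: Nabla_face_eq_minface minface_phi phi_Nabla_Jc)

lemma phi_Nabla_i_of_Delta_face:
  assumes "w \<in> Delta_face"
  shows "phi (Nabla i) w = 1"
proof -
  have "w \<in> Delta_J" "w \<bullet> v = -1"
    using assms by (auto simp: Delta_face_eq)
  moreover have "-1 \<le> q \<bullet> w" if "q \<in> Nabla_Jc" for q
    using inner_Delta_J_Nabla_Jc[OF \<open>w \<in> Delta_J\<close> that] by (simp add: inner_commute)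
  ultimately have "phi Nabla_Jc w = - (v \<bullet> w)"
    using v_in_Nabla_Jc by (intro phi_eqI) (auto simp: inner_commute)
  with \<open>w \<in> Delta_J\<close> \<open>w \<bullet> v = -1\<close> show ?thesis
    by (simp add: phi_Nabla_Jc inner_commute)
qed

lemma zero_in_minface_Nabla: "w \<in> Delta_J \<Longrightarrow> k \<in> Jc - {i} \<Longrightarrow> 0 \<in> minface (Nabla k) w"
  using phi_Nabla_outside_J zero_in_Nabla by (auto simp: minface_phi Jc_def)

lemma Nabla_face_memI: "w \<in> Delta_J \<Longrightarrow> y \<in> minface (Nabla i) w \<Longrightarrow> y \<in> Nabla_face w"
  unfolding Nabla_face_msum using zero_in_minface_Nabla
  by (intro msum_memI_single[OF finite_Jc i_in_Jc])

lemma Nabla_face_add_memI: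
  "w \<in> Delta_J \<Longrightarrow> y0 \<in> minface (Nabla i) w \<Longrightarrow> k \<in> Jc - {i} \<Longrightarrow> e \<in> minface (Nabla k) w
    \<Longrightarrow> y0 + e \<in> Nabla_face w"
  unfolding Nabla_face_msum using zero_in_minface_Nabla
  by (intro msum_memI_pair[OF finite_Jc i_in_Jc]) auto

lemma minface_Nabla_i_nonempty: "minface (Nabla i) w \<noteq> {}"
  using minface_nonempty[OF compact_Nabla[OF i_in]] zero_in_Nabla by blast

(* Together with the orthogonality of the two faces, this makes every constraint that is tight
   at one face constant on the other. *)
lemma tight_facet_normal:
  assumes "w \<in> Ds i" "phi (Nabla i) w = 1" "e \<in> E" "w \<bullet> e = - (if colour e \<in> J then 1 else 0)"
    and "y0 \<in> minface (Nabla i) w"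
  shows "e \<in> Nabla_face w \<or> y0 + e \<in> Nabla_face w"
proof -
  have "w \<in> Delta_J"
    using assms(1) Ds_i_subset_Delta_J by blast
  have "e \<in> Nabla (colour e)" "colour e \<in> {1..r}"
    using facet_normal_in_Nabla colour_in assms(3) by auto
  have w_e: "- (if colour e = i then 1 else 0) \<le> w \<bullet> e"
    using assms(1,3) Ds_eq[OF i_in] by blast
  consider "colour e = i" | "colour e \<in> J - {i}" | "colour e \<in> Jc - {i}"
    using \<open>colour e \<in> {1..r}\<close> by (auto simp: Jc_def)
  then show ?thesis
  proof cases
    case 1
    then have "e \<in> minface (Nabla i) w"
      using assms(2,4) i_in_J \<open>e \<in> Nabla (colour e)\<close> by (simp add: minface_phi inner_commute)
    then show ?thesis
      using Nabla_face_memI \<open>w \<in> Delta_J\<close> by blast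
  next
    case 2
    with assms(4) w_e show ?thesis
      by simp
  next
    case 3
    then have "e \<in> minface (Nabla (colour e)) w"
      using assms(4) \<open>e \<in> Nabla (colour e)\<close> phi_Nabla_outside_J[OF \<open>w \<in> Delta_J\<close>]
      by (auto simp: minface_phi inner_commute Jc_def)
    then show ?thesis
      using Nabla_face_add_memI[OF \<open>w \<in> Delta_J\<close> assms(5)] 3 by blast
  qed
qed

lemma tight_vertex:
  assumes "j \<in> {1..r}" "x \<in> Ds j" "v \<bullet> x = - (if j \<in> Jc then 1 else 0)"
    and "x0 \<in> minface (Ds i) v"
  shows "x \<in> Delta_face \<or> x0 + x \<in> Delta_face"
proof -
  consider "j = i" | "j \<in> Jc - {i}" | "j \<in> J - {i}"
    using assms(1) by (auto simp: Jc_def)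
  then show ?thesis
  proof cases
    case 1
    then have "x \<in> minface (Ds i) v"
      using assms(2,3) i_in_Jc phi_Ds_v[OF i_in] by (simp add: minface_phi inner_commute)
    then show ?thesis
      using Delta_face_memI by blast
  next
    case 2
    then show ?thesis
      using assms neg_phi_le_inner_Ds[OF assms(1,2), of v] phi_Ds_v[OF assms(1)]
      by (simp add: inner_commute)
  next
    case 3
    then have "x \<in> minface (Ds j) v"
      using assms(1-3) phi_Ds_v[OF assms(1)] by (auto simp: minface_phi inner_commute Jc_def)
    then show ?thesis
      using Delta_face_add_memI[OF assms(4)] 3 by blast
  qed
qed

lemma inner_Delta_face_Nabla_face:
  assumes "w \<in> Delta_face" "w \<in> rel_interior Delta_face \<or> v \<in> rel_interior (Nabla_face w)"
    and "q \<in> Delta_face" "y \<in> Nabla_face w"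
  shows "q \<bullet> y = -1"
proof -
  have "w \<in> Delta_J" "w \<bullet> v = -1"
    using assms(1) by (auto simp: Delta_face_eq)
  then have G: "Nabla_face w = {y \<in> Nabla_Jc. y \<bullet> w = -1}"
    using Nabla_face_eq phi_Nabla_i_of_Delta_face[OF assms(1)] by blast
  have "v \<in> Nabla_face w"
    using v_in_Nabla_Jc \<open>w \<bullet> v = -1\<close> by (simp add: G inner_commute)
  have pairing: "-1 \<le> q' \<bullet> y'" if "q' \<in> Delta_face" "y' \<in> Nabla_face w" for q' y'
    using that inner_Delta_J_Nabla_Jc by (auto simp: G Delta_face_eq)
  from assms(2) show ?thesis
  proof
    assume "w \<in> rel_interior Delta_face"
    moreover have "w \<bullet> y = -1"
      using assms(4) by (simp add: G inner_commute)
    ultimately show ?thesis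
      using inner_eq_on_rel_interior[OF convex_Delta_face _ _ _ assms(3)] pairing assms(4) by blast
  next
    assume "v \<in> rel_interior (Nabla_face w)"
    moreover have "v \<bullet> q = -1"
      using assms(3) by (simp add: Delta_face_eq inner_commute)
    ultimately have "y \<bullet> q = -1"
      using inner_eq_on_rel_interior[OF convex_Nabla_face _ _ _ assms(4)] pairing assms(3)
      by (metis inner_commute)
    then show ?thesis
      by (simp add: inner_commute)
  qed
qed

lemma facet_normal_ge_on_Delta_J:
  "q \<in> Delta_J \<Longrightarrow> e \<in> E \<Longrightarrow> - (if colour e \<in> J then 1 else 0) \<le> q \<bullet> e"
  unfolding Delta_J_eq by blast

lemma facet_normal_ge_on_Ds:
  "j \<in> {1..r} \<Longrightarrow> x \<in> Ds j \<Longrightarrow> e \<in> E \<Longrightarrow> - (if colour e = j then 1 else 0) \<le> x \<bullet> e"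
  using Ds_eq by blast

(* By integrality only <w, e> = -1 has to be excluded, for a facet normal e whose colour lies in
   J - {i}; but then <., e> = -1 on the whole face, whereas <x0, e> >= 0 for x0 in Delta_i(v). *)
lemma rel_interior_Delta_face_subset_Ds:
  assumes "lattice_pt w" "w \<in> rel_interior Delta_face"
  shows "w \<in> Ds i"
  unfolding Ds_eq[OF i_in]
proof (safe)
  fix e assume "e \<in> E"
  have "w \<in> Delta_J"
    using assms(2) rel_interior_subset Delta_face_subset by blast
  then have w_e: "- (if colour e \<in> J then 1 else 0) \<le> w \<bullet> e"
    using \<open>e \<in> E\<close> by (rule facet_normal_ge_on_Delta_J)
  show "- (if colour e = i then 1 else 0) \<le> w \<bullet> e"
  proof (rule ccontr)
    assume "\<not> ?thesis"
    then have "colour e \<noteq> i" "colour e \<in> J" "w \<bullet> e < 0"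
      using w_e i_in_J by (auto split: if_splits)
    moreover obtain z :: int where "w \<bullet> e = of_int z"
      using lattice_pt_inner_Ints[OF assms(1) lattice_pt_E[OF \<open>e \<in> E\<close>]] by (rule Ints_cases)
    ultimately have "w \<bullet> e = -1"
      using w_e by simp
    obtain x0 where x0: "x0 \<in> minface (Ds i) v"
      using minface_Ds_i_v_nonempty by blast
    have "- 1 \<le> q \<bullet> e" if "q \<in> Delta_face" for q
      using facet_normal_ge_on_Delta_J[OF _ \<open>e \<in> E\<close>, of q] that Delta_face_subset
        \<open>colour e \<in> J\<close> by auto
    then have "x0 \<bullet> e = -1"
      using inner_eq_on_rel_interior[OF convex_Delta_face _ assms(2) \<open>w \<bullet> e = -1\<close> Delta_face_memI[OF x0]]
      by blast
    moreover have "0 \<le> x0 \<bullet> e"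
    proof -
      have "x0 \<in> Ds i"
        using x0 by (simp add: minface_phi)
      with facet_normal_ge_on_Ds[OF i_in _ \<open>e \<in> E\<close>] \<open>colour e \<noteq> i\<close> show ?thesis
        by fastforce
    qed
    ultimately show False
      by simp
  qed
qed

lemma Delta_face_subset_frontier:
  assumes "w \<in> Delta_face" "w \<in> Ds i"
  shows "w \<in> frontier (nabla_dual r Ds)"
proof -
  have "w \<bullet> v = -1"
    using assms(1) by (simp add: Delta_face_eq)
  then have "v \<noteq> 0"
    by auto
  have "v \<bullet> x \<ge> -1" if "j \<in> {1..r}" "x \<in> Ds j" for j x
    using neg_phi_le_inner_Ds[OF that, of v] phi_Ds_v[OF that(1)]
    by (simp add: inner_commute split: if_splits)
  then have "(\<Union>j\<in>{1..r}. Ds j) \<subseteq> {x. v \<bullet> x \<ge> -1}"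
    by blast
  then have "nabla_dual r Ds \<subseteq> {x. v \<bullet> x \<ge> -1}"
    unfolding nabla_dual_def by (rule hull_minimal) (rule convex_halfspace_ge)
  then have "interior (nabla_dual r Ds) \<subseteq> interior {x. v \<bullet> x \<ge> -1}"
    by (rule interior_mono)
  also have "\<dots> = {x. v \<bullet> x > -1}"
    using \<open>v \<noteq> 0\<close> by simp
  finally have "interior (nabla_dual r Ds) \<subseteq> {x. v \<bullet> x > -1}" .
  moreover have "w \<in> nabla_dual r Ds"
    unfolding nabla_dual_def using assms(2) i_in by (blast intro: hull_inc)
  ultimately show ?thesis
    using \<open>w \<bullet> v = -1\<close> closure_subset by (auto simp: frontier_def inner_commute)
qed

lemma Nabla_Jc_eq:
  "Nabla_Jc = {y. \<forall>k\<in>vertex_index. - (if fst k \<in> Jc then 1 else 0) \<le> y \<bullet> snd k}"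
  unfolding Nabla_Jc_def msum_Nabla_eq[OF Jc_subset] vertex_index_def by auto

lemma v_in_rel_interior_Nabla_face:
  assumes "w \<in> rel_interior Delta_face"
  shows "v \<in> rel_interior (Nabla_face w)"
proof -
  have "w \<in> Delta_face"
    using assms rel_interior_subset by blast
  then have "w \<in> Delta_J" "w \<bullet> v = -1"
    by (auto simp: Delta_face_eq)
  have G_eq: "Nabla_face w = {y \<in> Nabla_Jc. y \<bullet> w = -1}"
    using Nabla_face_eq[OF \<open>w \<in> Delta_J\<close> phi_Nabla_i_of_Delta_face[OF \<open>w \<in> Delta_face\<close>]] .
  then have G: "Nabla_face w
      = {y. (\<forall>k\<in>vertex_index. - (if fst k \<in> Jc then 1 else 0) \<le> y \<bullet> snd k) \<and> y \<bullet> w = -1}"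
    by (auto simp: Nabla_Jc_eq)
  have "v \<in> Nabla_face w"
    using v_in_Nabla_Jc \<open>w \<bullet> v = -1\<close> by (simp add: G_eq inner_commute)
  obtain x0 where x0: "x0 \<in> minface (Ds i) v"
    using minface_Ds_i_v_nonempty by blast
  have orth: "\<And>q y. q \<in> Delta_face \<Longrightarrow> y \<in> Nabla_face w \<Longrightarrow> q \<bullet> y = -1"
    using inner_Delta_face_Nabla_face[OF \<open>w \<in> Delta_face\<close>] assms by blast
  show ?thesis
  proof (rule rel_interior_polyhedron_face[OF finite_vertex_index G \<open>v \<in> Nabla_face w\<close>])
    fix k y assume "k \<in> vertex_index" and tight: "v \<bullet> snd k = - (if fst k \<in> Jc then 1 else 0)"
      and "y \<in> Nabla_face w"
    obtain j x where k: "k = (j, x)" "j \<in> {1..r}" "x \<in> Ds j"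
      using \<open>k \<in> vertex_index\<close> by (rule vertex_indexE)
    then have "x \<in> Delta_face \<or> x0 + x \<in> Delta_face"
      using tight_vertex[OF k(2,3) _ x0] tight by simp
    then have "x \<bullet> y = x \<bullet> v"
      using inner_eq_if_const_pairing[OF orth Delta_face_memI[OF x0] _ \<open>y \<in> Nabla_face w\<close> \<open>v \<in> Nabla_face w\<close>]
      by blast
    then show "y \<bullet> snd k = - (if fst k \<in> Jc then 1 else 0)"
      using tight k(1) by (simp add: inner_commute)
  qed
qed

lemma phi_Nabla_i_of_Delta0:
  assumes "lattice_pt w" "w \<in> Delta0 r Ds i"
  shows "phi (Nabla i) w = 1"
proof -
  have "w \<in> Ds i" "w \<in> frontier (nabla_dual r Ds)"
    using assms(2) by (auto simp: Delta0_def)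
  then have "w \<noteq> 0"
    using zero_in_interior_nabla_dual by (auto simp: frontier_def)
  obtain z :: int where z: "phi (Nabla i) w = of_int z"
    using phi_Nabla_Ints[OF i_in assms(1)] by (rule Ints_cases)
  have "0 \<le> z" "z \<le> 1" "z \<noteq> 0"
    using z phi_Nabla_nonneg[OF i_in, of w] phi_Nabla_le_1[OF i_in \<open>w \<in> Ds i\<close>]
      phi_Nabla_eq_0_imp_zero[OF i_in \<open>w \<in> Ds i\<close>] \<open>w \<noteq> 0\<close> by auto
  then have "z = 1"
    by linarith
  with z show ?thesis
    by simp
qed

lemma w_in_rel_interior_Delta_face:
  assumes "lattice_pt w" "w \<in> Delta0 r Ds i" "v \<in> rel_interior (Nabla_face w)"
  shows "w \<in> rel_interior Delta_face"
proof -
  have "w \<in> Ds i"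
    using assms(2) by (simp add: Delta0_def)
  then have "w \<in> Delta_J"
    using Ds_i_subset_Delta_J by blast
  have phi1: "phi (Nabla i) w = 1"
    by (rule phi_Nabla_i_of_Delta0[OF assms(1,2)])
  have "v \<in> Nabla_face w"
    using assms(3) rel_interior_subset by blast
  then have "w \<bullet> v = -1"
    using Nabla_face_eq[OF \<open>w \<in> Delta_J\<close> phi1] by (simp add: inner_commute)
  then have "w \<in> Delta_face"
    using \<open>w \<in> Delta_J\<close> by (simp add: Delta_face_eq)
  have F: "Delta_face = {x. (\<forall>e\<in>E. - (if colour e \<in> J then 1 else 0) \<le> x \<bullet> id e) \<and> x \<bullet> v = -1}"
    by (auto simp: Delta_face_eq Delta_J_eq)
  obtain y0 where y0: "y0 \<in> minface (Nabla i) w"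
    using minface_Nabla_i_nonempty by blast
  have y0G: "y0 \<in> Nabla_face w"
    using Nabla_face_memI[OF \<open>w \<in> Delta_J\<close> y0] .
  have orth: "\<And>y q. y \<in> Nabla_face w \<Longrightarrow> q \<in> Delta_face \<Longrightarrow> y \<bullet> q = -1"
    using inner_Delta_face_Nabla_face[OF \<open>w \<in> Delta_face\<close>] assms(3) by (metis inner_commute)
  show ?thesis
  proof (rule rel_interior_polyhedron_face[OF finite_E F \<open>w \<in> Delta_face\<close>])
    fix e q assume "e \<in> E" and tight: "w \<bullet> id e = - (if colour e \<in> J then 1 else 0)"
      and "q \<in> Delta_face"
    then have "e \<in> Nabla_face w \<or> y0 + e \<in> Nabla_face w"
      using tight_facet_normal[OF \<open>w \<in> Ds i\<close> phi1 _ _ y0] by simp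
    then have "e \<bullet> q = e \<bullet> w"
      using inner_eq_if_const_pairing[OF orth y0G _ \<open>q \<in> Delta_face\<close> \<open>w \<in> Delta_face\<close>] by blast
    then show "q \<bullet> id e = - (if colour e \<in> J then 1 else 0)"
      using tight by (simp add: inner_commute)
  qed
qed

lemma Delta_face_step:
  assumes "w \<in> Ds i" "w \<in> Delta_face" and u: "\<And>y. y \<in> Nabla_face w \<Longrightarrow> u \<bullet> y = 0"
  shows "\<exists>\<epsilon>>0. w + \<epsilon> *\<^sub>R u \<in> Delta_face"
proof -
  have "w \<in> Delta_J" "w \<bullet> v = -1"
    using assms(2) by (auto simp: Delta_face_eq)
  have phi1: "phi (Nabla i) w = 1"
    using phi_Nabla_i_of_Delta_face[OF assms(2)] .
  have "v \<in> Nabla_face w"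
    using v_in_Nabla_Jc \<open>w \<bullet> v = -1\<close> Nabla_face_eq[OF \<open>w \<in> Delta_J\<close> phi1]
    by (simp add: inner_commute)
  obtain y0 where y0: "y0 \<in> minface (Nabla i) w"
    using minface_Nabla_i_nonempty by blast
  have y0G: "y0 \<in> Nabla_face w"
    using Nabla_face_memI[OF \<open>w \<in> Delta_J\<close> y0] .
  have feasible: "- (if colour e \<in> J then 1 else 0) \<le> w \<bullet> id e" if "e \<in> E" for e
    using facet_normal_ge_on_Delta_J[OF \<open>w \<in> Delta_J\<close> that] by simp
  have "0 \<le> u \<bullet> id e" if "e \<in> E" "w \<bullet> id e = - (if colour e \<in> J then 1 else 0)" for e
  proof -
    have "e \<in> Nabla_face w \<or> y0 + e \<in> Nabla_face w"
      using tight_facet_normal[OF assms(1) phi1 _ _ y0] that by simp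
    then show ?thesis
    proof
      assume "y0 + e \<in> Nabla_face w"
      then have "u \<bullet> y0 + u \<bullet> e = 0"
        using u[of "y0 + e"] by (simp add: inner_add_right)
      then show ?thesis
        using u[OF y0G] by simp
    qed (use u in simp)
  qed
  then obtain \<epsilon> where "\<epsilon> > 0"
    and \<epsilon>: "\<And>e. e \<in> E \<Longrightarrow> - (if colour e \<in> J then 1 else 0) \<le> (w + \<epsilon> *\<^sub>R u) \<bullet> id e"
    using polyhedron_small_step[where a = id and b = "\<lambda>e. - (if colour e \<in> J then 1 else 0)" and z = w
        and u = u, OF finite_E feasible] by blast
  have "w + \<epsilon> *\<^sub>R u \<in> Delta_J"
    unfolding Delta_J_eq using \<epsilon> by (simp only: id_apply mem_Collect_eq) blast
  moreover have "(w + \<epsilon> *\<^sub>R u) \<bullet> v = -1"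
    using u[OF \<open>v \<in> Nabla_face w\<close>] \<open>w \<bullet> v = -1\<close> by (simp add: inner_add_left)
  ultimately show ?thesis
    using \<open>\<epsilon> > 0\<close> by (auto simp: Delta_face_eq)
qed

lemma aff_dim_Delta_face_Nabla_face:
  assumes "w \<in> Ds i" "w \<in> rel_interior Delta_face"
  shows "aff_dim Delta_face + aff_dim (Nabla_face w) = int CARD('n) - 1"
proof -
  have "w \<in> Delta_face"
    using assms(2) rel_interior_subset by blast
  have "aff_dim Delta_face + aff_dim (Nabla_face w) = int DIM(real^'n) - 1"
  proof (rule aff_dim_add_of_dual_pair[OF \<open>w \<in> Delta_face\<close>, of "-1"])
    show "q \<bullet> y = -1" if "q \<in> Delta_face" "y \<in> Nabla_face w" for q y
      using inner_Delta_face_Nabla_face[OF \<open>w \<in> Delta_face\<close> _ that] assms(2) by blast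
    show "\<exists>\<epsilon>>0. w + \<epsilon> *\<^sub>R u \<in> Delta_face" if "\<And>y. y \<in> Nabla_face w \<Longrightarrow> u \<bullet> y = 0" for u
      using Delta_face_step[OF assms(1) \<open>w \<in> Delta_face\<close> that] .
  qed simp
  then show ?thesis
    by simp
qed

theorem rel_interior_Delta_face_iff:
  assumes "lattice_pt w"
  shows "(w \<in> rel_interior Delta_face \<longleftrightarrow> w \<in> Delta0 r Ds i \<and> v \<in> rel_interior (Nabla_face w))
    \<and> (w \<in> rel_interior Delta_face \<longrightarrow>
        aff_dim Delta_face + aff_dim (Nabla_face w) = int CARD('n) - 1)"
proof -
  have "w \<in> Delta0 r Ds i \<and> v \<in> rel_interior (Nabla_face w)" if w: "w \<in> rel_interior Delta_face"
  proof -
    have "w \<in> Ds i"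
      using rel_interior_Delta_face_subset_Ds[OF assms w] .
    moreover have "w \<in> frontier (nabla_dual r Ds)"
      using Delta_face_subset_frontier[OF rel_interior_subset[THEN subsetD, OF w] \<open>w \<in> Ds i\<close>] .
    ultimately show ?thesis
      using assms v_in_rel_interior_Nabla_face[OF w] by (simp add: Delta0_def)
  qed
  moreover have "w \<in> rel_interior Delta_face"
    if "w \<in> Delta0 r Ds i" "v \<in> rel_interior (Nabla_face w)"
    using w_in_rel_interior_Delta_face[OF assms that] .
  moreover have "aff_dim Delta_face + aff_dim (Nabla_face w) = int CARD('n) - 1"
    if w: "w \<in> rel_interior Delta_face"
    using aff_dim_Delta_face_Nabla_face[OF rel_interior_Delta_face_subset_Ds[OF assms w] w] .
  ultimately show ?thesis
    by blast
qed

end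

theorem mainTheorem16:
  fixes D :: "(real^'n) set" and r :: nat and Ds :: "nat \<Rightarrow> (real^'n) set"
    and i :: nat and J :: "nat set" and v :: "real^'n"
  assumes "nef_partition D r Ds"
    and "i \<in> J" and "J \<subseteq> {1..r}"
    and "v \<in> nabla0 D Ds i"
  shows "\<forall>w. lattice_pt w \<longrightarrow>
     ((w \<in> rel_interior (msum J (\<lambda>j. minface (Ds j) v)) \<longleftrightarrow>
        w \<in> Delta0 r Ds i \<and>
        v \<in> rel_interior (mplus (minface (nabla D Ds i) w)
                                 (msum ({1..r} - J) (\<lambda>j. minface (nabla D Ds j) w))))
      \<and> (w \<in> rel_interior (msum J (\<lambda>j. minface (Ds j) v)) \<longrightarrow>
          aff_dim (msum J (\<lambda>j. minface (Ds j) v))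
          + aff_dim (mplus (minface (nabla D Ds i) w)
                           (msum ({1..r} - J) (\<lambda>j. minface (nabla D Ds j) w)))
          = int CARD('n) - 1))"
proof -
  interpret nef_face D r Ds i J v
    by unfold_locales (use assms in auto)
  show ?thesis
    using rel_interior_Delta_face_iff unfolding Delta_face_def Nabla_face_def by blast
qed

end
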